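(* Let $\lambda>0$ and $0\le\alpha<1$, and let $X_1,\dots,X_n$ be i.i.d. random variables with the generalized Poisson distribution $$\Pr\{X=x\}=\frac{\lambda(\lambda+x\alpha)^{x-1}e^{-\lambda-x\alpha}}{x!},\qquad x=0,1,2,\dots,$$ and $\overline{X}_n=\frac1n\sum_{i=1}^nX_i$. Then $$\Pr\{\overline{X}_n\le z\}\le\frac{\lambda}{(1-\alpha)(\lambda+z\alpha)}\Big[\Big(\frac\lambda z+\alpha\Big)^z\frac{e^{(1-\alpha)z}}{e^\lambda}\Big]^n\quad\text{if }0<z\le\frac{\lambda}{1-\alpha},$$ $$\Pr\{\overline{X}_n\ge z\}\le\frac{\lambda}{(1-\alpha)(\lambda+z\alpha)}\Big[\Big(\frac\lambda z+\alpha\Big)^z\frac{e^{(1-\alpha)z}}{e^\lambda}\Big]^n\quad\text{if }z\ge\frac{\lambda}{1-\alpha}.$$ Moreover, with $\nu=\frac12\big[(1-\alpha)z+\sqrt{(1-\alpha)^2z^2+4z\alpha/n}\big]$, $$\Pr\{\overline{X}_n\le z\}\le\frac{\lambda(\nu+z\alpha)}{\nu(\lambda+z\alpha)}\Big[\Big(\frac{\lambda+z\alpha}{\nu+z\alpha}\Big)^z\frac{e^\nu}{e^\lambda}\Big]^n\quad\text{if }0<z\le\frac{\lambda}{1-\alpha+\frac{\alpha}{n\lambda}},$$ $$\Pr\{\overline{X}_n\ge z\}\le\frac{\lambda(\nu+z\alpha)}{\nu(\lambda+z\alpha)}\Big[\Big(\frac{\lambda+z\alpha}{\nu+z\alpha}\Big)^z\frac{e^\nu}{e^\lambda}\Big]^n\quad\text{if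 }z\ge\frac{\lambda}{1-\alpha+\frac{\alpha}{n\lambda}}.$$ Furthermore, if $\alpha=0$, then with $\varDelta=\min\big\{\frac12,\frac{\mathscr{C}}{\sqrt n}(3+\frac1z)^{3/4}\big\}$, where $\mathscr{C}$ is the Berry–Esseen constant, $$\Pr\{\overline{X}_n\ge z\}\le\Big(\frac12+\varDelta\Big)\Big(\frac{\lambda^ze^z}{z^ze^\lambda}\Big)^n\ \text{ for }z\ge\lambda,\qquad \Pr\{\overline{X}_n\le z\}\le\Big(\frac12+\varDelta\Big)\Big(\frac{\lambda^ze^z}{z^ze^\lambda}\Big)^n\ \text{ for }0<z\le\lambda.$$
   Context: The Berry–Esseen constant $\mathscr{C}$ is a positive absolute constant such that for every random variable $Y$ with $\mathbb{E}[Y]=0$, $\mathbb{E}[Y^2]>0$, $\mathbb{E}[|Y|^3]<\infty$, every $n$ and every $y\in\mathbb{R}$, $|F_n(y)-\Phi(y)|\le\frac{\mathscr{C}}{\sqrt n}\frac{\mathbb{E}[|Y|^3]}{\mathbb{E}^{3/2}[Y^2]}$, where $F_n$ is the cdf of $\sum_{i=1}^nY_i/\sqrt{n\mathbb{E}[Y^2]}$ for i.i.d. copies $Y_i$ of $Y$ and $\Phi$ is the standard normal cdf. *)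

theory Defs
  imports "HOL-Probability.Probability"
begin

definition gen_poisson_pmf :: "real \<Rightarrow> real \<Rightarrow> nat \<Rightarrow> real" where
  "gen_poisson_pmf lam alpha x =
     lam * (lam + real x * alpha) powr (real x - 1) * exp (- lam - real x * alpha) / fact x"

definition berry_esseen_const :: "real \<Rightarrow> bool" where
  "berry_esseen_const C \<longleftrightarrow> C > 0 \<and>
    (\<forall>\<mu> :: real measure. prob_space \<mu> \<and> sets \<mu> = sets borel \<and>
       integrable \<mu> (\<lambda>x. \<bar>x\<bar> ^ 3) \<and> (\<integral>x. x \<partial>\<mu>) = 0 \<and> (\<integral>x. x ^ 2 \<partial>\<mu>) > 0 \<longrightarrow>
       (\<forall>n::nat. n \<ge> 1 \<longrightarrow> (\<forall>y::real.
          \<bar>measure (PiM {..<n} (\<lambda>_. \<mu>))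
              {\<omega> \<in> space (PiM {..<n} (\<lambda>_. \<mu>)).
                 (\<Sum>i<n. \<omega> i) / sqrt (real n * (\<integral>x. x ^ 2 \<partial>\<mu>)) \<le> y}
           - measure (density lborel std_normal_density) {..y}\<bar>
          \<le> C / sqrt (real n) * (\<integral>x. \<bar>x\<bar> ^ 3 \<partial>\<mu>) / (\<integral>x. x ^ 2 \<partial>\<mu>) powr (3/2))))"

end

theory Submission
  imports Defs
begin

text \<open>The sum \<open>S\<close> of the \<open>X\<^sub>i\<close> is again generalized Poisson, with parameter \<open>n lam\<close>: the
  family \<open>gen_poisson_pmf t a\<close> is closed under convolution in \<open>t\<close> by Abel's generalization of
  the binomial theorem. For any \<open>w > 0\<close> the likelihood ratio of \<open>gen_poisson_pmf (n lam) a\<close>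
  to \<open>gen_poisson_pmf (n w) a\<close> at \<open>j\<close> is monotone in \<open>j\<close> (increasing if \<open>w \<le> lam\<close>,
  decreasing if \<open>w \<ge> lam\<close>). So \<open>P (S \<le> n z)\<close>, resp. \<open>P (S \<ge> n z)\<close>, is at most the ratio at
  \<open>n z\<close> times the corresponding mass of \<open>gen_poisson_pmf (n w) a\<close>, which is at most \<open>1\<close>.
  The choices \<open>w = (1 - alpha) z\<close> and \<open>w = \<nu>\<close> give the first four bounds. For \<open>alpha = 0\<close>
  and \<open>w = z\<close>, the remaining mass is a Poisson\<open>(n z)\<close> probability of lying on one side of its
  mean, which the Berry-Esseen theorem for the centered Poisson\<open>(z)\<close> law bounds by
  \<open>1/2 + \<Delta>\<close>, its third absolute moment being controlled by its second and fourth moments.\<close>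

section \<open>Abel's convolution identity\<close>

definition abel_coeff :: "real \<Rightarrow> real \<Rightarrow> nat \<Rightarrow> real" where
  "abel_coeff a t x = (if x = 0 then 1 else t * (t + real x * a) ^ (x - 1) / fact x)"

lemma abel_coeff_0 [simp]: "abel_coeff a t 0 = 1"
  and abel_coeff_at_0_Suc [simp]: "abel_coeff a 0 (Suc k) = 0"
  by (simp_all add: abel_coeff_def)

lemma abel_coeff_has_field_derivative:
  "((\<lambda>t. abel_coeff a t x) has_field_derivative
     (if x = 0 then 0 else abel_coeff a (t + a) (x - 1))) (at t)"
proof (cases x)
  case 0
  then show ?thesis by simp
next
  case (Suc k)
  show ?thesis
  proof (cases k)
    case 0
    then show ?thesis using Suc by (simp add: abel_coeff_def)
  next
    case (Suc j)
    note x = \<open>x = Suc k\<close> Suc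
    have "((\<lambda>t. t * (t + real x * a) ^ Suc j / fact x) has_field_derivative
      (((t + real x * a) ^ Suc j + t * (real (Suc j) * (t + real x * a) ^ j)) / fact x)) (at t)"
      by (auto intro!: derivative_eq_intros) (cases j; simp add: algebra_simps)
    moreover have "((t + real x * a) ^ Suc j + t * (real (Suc j) * (t + real x * a) ^ j)) / fact x
        = abel_coeff a (t + a) (x - 1)"
    proof -
      have shift: "t + a + real (Suc j) * a = t + real x * a"
        using x by (simp add: algebra_simps)
      have "abel_coeff a (t + a) (Suc j) = (t + a) * (t + real x * a) ^ j / fact (Suc j)"
        unfolding abel_coeff_def shift[symmetric] by simp
      moreover have "(fact x :: real) = real (Suc (Suc j)) * fact (Suc j)"
        using x by simp
      moreover have "(t + real x * a) ^ Suc j + t * (real (Suc j) * (t + real x * a) ^ j)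
          = real (Suc (Suc j)) * ((t + a) * (t + real x * a) ^ j)"
        using x by (simp add: algebra_simps)
      ultimately show ?thesis
        using x by simp
    qed
    moreover have "(\<lambda>t. abel_coeff a t x) = (\<lambda>t. t * (t + real x * a) ^ Suc j / fact x)"
      using x by (simp add: abel_coeff_def fun_eq_iff)
    ultimately show ?thesis
      using x by simp
  qed
qed

text \<open>Both sides vanish at \<open>t = 0\<close> for \<open>x > 0\<close>, and by induction on \<open>x\<close> they have the same
  derivative in \<open>t\<close>.\<close>
lemma abel_coeff_convolution:
  "(\<Sum>k\<le>x. abel_coeff a t k * abel_coeff a s (x - k)) = abel_coeff a (t + s) x"
proof (induction x arbitrary: t s)
  case 0
  then show ?case by simp
next
  case (Suc x)
  define f where "f t = (\<Sum>k\<le>Suc x. abel_coeff a t k * abel_coeff a s (Suc x - k))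
                        - abel_coeff a (t + s) (Suc x)" for t
  have "DERIV f t :> 0" for t
  proof -
    have "DERIV f t :> (\<Sum>k\<le>Suc x. (if k = 0 then 0 else abel_coeff a (t + a) (k - 1))
                           * abel_coeff a s (Suc x - k)) - abel_coeff a (t + s + a) x"
      unfolding f_def
    proof (rule DERIV_diff)
      show "DERIV (\<lambda>t. \<Sum>k\<le>Suc x. abel_coeff a t k * abel_coeff a s (Suc x - k)) t
          :> (\<Sum>k\<le>Suc x. (if k = 0 then 0 else abel_coeff a (t + a) (k - 1))
                 * abel_coeff a s (Suc x - k))"
        by (intro DERIV_sum DERIV_cmult_right abel_coeff_has_field_derivative)
      show "DERIV (\<lambda>t. abel_coeff a (t + s) (Suc x)) t :> abel_coeff a (t + s + a) x"
        using DERIV_shift[of "\<lambda>t. abel_coeff a t (Suc x)" "abel_coeff a (t + s + a) x" t s]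
          abel_coeff_has_field_derivative[of a "Suc x" "t + s"] by simp
    qed
    moreover have "(\<Sum>k\<le>Suc x. (if k = 0 then 0 else abel_coeff a (t + a) (k - 1))
                           * abel_coeff a s (Suc x - k)) = abel_coeff a (t + s + a) x"
      by (simp only: sum.atMost_Suc_shift) (simp add: Suc.IH add_ac)
    ultimately show ?thesis by simp
  qed
  then have "f t = f 0"
    by (intro DERIV_isconst_all) auto
  moreover have "f 0 = 0"
    unfolding f_def by (simp only: sum.atMost_Suc_shift) simp
  ultimately show ?case
    by (simp add: f_def)
qed

lemma abel_coeff_nonneg: "0 \<le> t \<Longrightarrow> 0 \<le> a \<Longrightarrow> 0 \<le> abel_coeff a t x"
  by (simp add: abel_coeff_def)

lemma abel_coeff_mono: "0 \<le> t \<Longrightarrow> t \<le> t' \<Longrightarrow> 0 \<le> a \<Longrightarrow> abel_coeff a t x \<le> abel_coeff a t' x"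
  unfolding abel_coeff_def by (auto intro!: divide_right_mono mult_mono power_mono)

lemma gen_poisson_pmf_eq_abel_coeff:
  assumes "0 < t" "0 \<le> a"
  shows "gen_poisson_pmf t a x = abel_coeff a t x * exp (- t - real x * a)"
proof (cases x)
  case 0
  then show ?thesis
    using assms by (simp add: gen_poisson_pmf_def powr_minus divide_simps)
next
  case (Suc k)
  have "0 < t + real x * a"
    using assms by (simp add: add_pos_nonneg)
  then have "(t + real x * a) powr (real x - 1) = (t + real x * a) ^ k"
    using Suc by (simp add: powr_realpow)
  then show ?thesis
    using Suc by (simp add: gen_poisson_pmf_def abel_coeff_def)
qed

lemma gen_poisson_pmf_nonneg: "0 < t \<Longrightarrow> 0 \<le> a \<Longrightarrow> 0 \<le> gen_poisson_pmf t a x"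
  by (simp add: gen_poisson_pmf_eq_abel_coeff abel_coeff_nonneg)

lemma gen_poisson_pmf_convolution:
  assumes "0 < t" "0 < s" "0 \<le> a"
  shows "(\<Sum>k\<le>x. gen_poisson_pmf t a k * gen_poisson_pmf s a (x - k)) = gen_poisson_pmf (t + s) a x"
proof -
  have "(\<Sum>k\<le>x. gen_poisson_pmf t a k * gen_poisson_pmf s a (x - k))
      = (\<Sum>k\<le>x. abel_coeff a t k * abel_coeff a s (x - k) * exp (- (t + s) - real x * a))"
  proof (rule sum.cong[OF refl])
    fix k assume "k \<in> {..x}"
    then have "(- t - real k * a) + (- s - real (x - k) * a) = - (t + s) - real x * a"
      by (simp add: of_nat_diff algebra_simps)
    then have "exp (- t - real k * a) * exp (- s - real (x - k) * a) = exp (- (t + s) - real x * a)"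
      by (simp only: mult_exp_exp)
    then show "gen_poisson_pmf t a k * gen_poisson_pmf s a (x - k)
        = abel_coeff a t k * abel_coeff a s (x - k) * exp (- (t + s) - real x * a)"
      using assms by (simp add: gen_poisson_pmf_eq_abel_coeff algebra_simps del: of_nat_diff)
  qed
  also have "\<dots> = abel_coeff a (t + s) x * exp (- (t + s) - real x * a)"
    by (simp add: sum_distrib_right[symmetric] abel_coeff_convolution)
  finally show ?thesis
    using assms by (simp add: gen_poisson_pmf_eq_abel_coeff)
qed

lemma gen_poisson_pmf_le_shift:
  assumes "0 < t" "t \<le> t'" "0 \<le> a"
  shows "gen_poisson_pmf t a x \<le> gen_poisson_pmf t' a x * exp (t' - t)"
proof -
  have "exp (- t - real x * a) = exp (- t' - real x * a) * exp (t' - t)"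
    by (simp add: mult_exp_exp)
  then show ?thesis
    using assms by (simp add: gen_poisson_pmf_eq_abel_coeff mult.assoc[symmetric]
        abel_coeff_nonneg abel_coeff_mono mult_right_mono)
qed

lemma summable_gen_poisson_pmf_mono:
  assumes "0 < t" "t \<le> t'" "0 \<le> a" "summable (gen_poisson_pmf t' a)"
  shows "summable (gen_poisson_pmf t a)"
  by (rule summable_comparison_test'[where g="\<lambda>x. gen_poisson_pmf t' a x * exp (t' - t)"])
     (use assms gen_poisson_pmf_le_shift gen_poisson_pmf_nonneg summable_mult2 in auto)

lemma gen_poisson_pmf_Cauchy_product:
  assumes "0 < t" "0 < s" "0 \<le> a"
    and "summable (gen_poisson_pmf t a)" "summable (gen_poisson_pmf s a)"
  shows "summable (gen_poisson_pmf (t + s) a)"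
    and "suminf (gen_poisson_pmf (t + s) a) = suminf (gen_poisson_pmf t a) * suminf (gen_poisson_pmf s a)"
proof -
  have "summable (\<lambda>k. norm (gen_poisson_pmf t a k))" "summable (\<lambda>k. norm (gen_poisson_pmf s a k))"
    using assms gen_poisson_pmf_nonneg by simp_all
  from summable_Cauchy_product[OF this] Cauchy_product[OF this] show
    "summable (gen_poisson_pmf (t + s) a)"
    "suminf (gen_poisson_pmf (t + s) a) = suminf (gen_poisson_pmf t a) * suminf (gen_poisson_pmf s a)"
    by (simp_all add: gen_poisson_pmf_convolution assms)
qed

lemma gen_poisson_pmf_mult_nat:
  assumes "0 < t" "0 \<le> a" "summable (gen_poisson_pmf t a)"
  shows "summable (gen_poisson_pmf (real (Suc k) * t) a) \<and>
         suminf (gen_poisson_pmf (real (Suc k) * t) a) = suminf (gen_poisson_pmf t a) ^ Suc k"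
proof (induction k)
  case 0
  then show ?case using assms by simp
next
  case (Suc k)
  have "real (Suc (Suc k)) * t = real (Suc k) * t + t"
    by (simp add: algebra_simps)
  moreover have "0 < real (Suc k) * t"
    using assms by simp
  ultimately show ?case
    using gen_poisson_pmf_Cauchy_product[of "real (Suc k) * t" t a] Suc assms by simp
qed

text \<open>The total mass \<open>m t\<close> of \<open>gen_poisson_pmf t a\<close> is multiplicative in \<open>t\<close> and
  \<open>m t \<le> m t' * exp (t' - t)\<close> for \<open>t \<le> t'\<close>. Since \<open>m (k * lam) = 1\<close>, every power of \<open>m t\<close>
  is at most \<open>exp lam\<close>, which forces \<open>m t \<le> 1\<close>.\<close>
lemma suminf_gen_poisson_pmf_le_1:
  assumes lam: "0 < lam" and a: "0 \<le> a" and sums: "gen_poisson_pmf lam a sums 1" and t: "0 < t"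
  shows "summable (gen_poisson_pmf t a)" and "suminf (gen_poisson_pmf t a) \<le> 1"
proof -
  have mass_lam: "summable (gen_poisson_pmf (real (Suc k) * lam) a)"
       "suminf (gen_poisson_pmf (real (Suc k) * lam) a) = 1" for k
    using gen_poisson_pmf_mult_nat[OF lam a, of k] sums by (auto simp: sums_iff)
  obtain k where "t / lam \<le> real k"
    using real_arch_simple by blast
  then have "t \<le> real (Suc k) * lam"
    using lam by (simp add: field_simps)
  then show st: "summable (gen_poisson_pmf t a)"
    using summable_gen_poisson_pmf_mono[OF t _ a mass_lam(1)] by blast
  define G where "G = suminf (gen_poisson_pmf t a)"
  have power_bound: "G ^ Suc k \<le> exp lam" for k
  proof -
    define m where "m = nat \<lceil>real (Suc k) * t / lam\<rceil>"
    have kt: "0 < real (Suc k) * t"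
      using t by simp
    have "real m = of_int \<lceil>real (Suc k) * t / lam\<rceil>"
      unfolding m_def using kt lam by simp
    then have "real (Suc k) * t / lam \<le> real m" "real m < real (Suc k) * t / lam + 1"
      by linarith+
    then have m1: "real (Suc k) * t \<le> real m * lam" and m2: "real m * lam \<le> real (Suc k) * t + lam"
      using lam by (simp_all add: field_simps)
    obtain j where mj: "m = Suc j"
      using m1 kt lam by (cases m) auto
    have "G ^ Suc k = suminf (gen_poisson_pmf (real (Suc k) * t) a)"
      using gen_poisson_pmf_mult_nat[OF t a st, of k] by (simp add: G_def)
    also have "\<dots> \<le> suminf (\<lambda>x. gen_poisson_pmf (real m * lam) a x * exp (real m * lam - real (Suc k) * t))"
      using gen_poisson_pmf_le_shift[OF kt m1 a] mass_lam[of j] gen_poisson_pmf_mult_nat[OF t a st, of k]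
      by (intro suminf_le) (auto simp: mj intro: summable_mult2)
    also have "\<dots> = exp (real m * lam - real (Suc k) * t)"
      using mass_lam[of j] by (simp add: mj suminf_mult2[symmetric])
    also have "\<dots> \<le> exp lam"
      using m2 by simp
    finally show ?thesis .
  qed
  show "suminf (gen_poisson_pmf t a) \<le> 1"
  proof (rule ccontr)
    assume "\<not> suminf (gen_poisson_pmf t a) \<le> 1"
    then have g: "0 < G - 1"
      by (simp add: G_def)
    obtain k :: nat where k: "exp lam / (G - 1) < real k"
      using reals_Archimedean2 by blast
    have "1 + real (Suc k) * (G - 1) \<le> (1 + (G - 1)) ^ Suc k"
      using g by (intro Bernoulli_inequality) simp
    then have "1 + real (Suc k) * (G - 1) \<le> exp lam"
      using power_bound[of k] by simp
    moreover have "exp lam < real k * (G - 1)"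
      using k g by (simp add: field_simps)
    ultimately show False
      using g by (simp add: algebra_simps)
  qed
qed

section \<open>Likelihood ratios\<close>

text \<open>The likelihood ratio \<open>gen_poisson_pmf L a j / gen_poisson_pmf th a j\<close>, as a function
  of a real argument in place of \<open>j\<close>.\<close>
definition gen_poisson_ratio :: "real \<Rightarrow> real \<Rightarrow> real \<Rightarrow> real \<Rightarrow> real" where
  "gen_poisson_ratio L th a t = (L / th) * ((L + t * a) / (th + t * a)) powr (t - 1) * exp (th - L)"

definition gen_poisson_log_ratio :: "real \<Rightarrow> real \<Rightarrow> real \<Rightarrow> real \<Rightarrow> real" where
  "gen_poisson_log_ratio L th a t = (t - 1) * (ln (L + t * a) - ln (th + t * a))"

lemma gen_poisson_pmf_eq_ratio_mult:
  assumes "0 < L" "0 < th" "0 \<le> a"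
  shows "gen_poisson_pmf L a j = gen_poisson_ratio L th a (real j) * gen_poisson_pmf th a j"
proof -
  have "0 < th + real j * a"
    using assms by (simp add: add_pos_nonneg)
  then have "0 < (th + real j * a) powr (real j - 1)"
    by simp
  moreover have "exp (th - L) * exp (- th - real j * a) = exp (- L - real j * a)"
    by (simp add: mult_exp_exp)
  ultimately show ?thesis
    using assms unfolding gen_poisson_ratio_def gen_poisson_pmf_def powr_divide
    by (simp add: field_simps)
qed

lemma gen_poisson_ratio_eq_exp:
  assumes "0 < L" "0 < th" "0 \<le> a" "0 \<le> t"
  shows "gen_poisson_ratio L th a t = (L / th) * exp (th - L) * exp (gen_poisson_log_ratio L th a t)"
proof -
  have "0 < L + t * a" "0 < th + t * a"
    using assms by (simp_all add: add_pos_nonneg)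
  then show ?thesis
    unfolding gen_poisson_ratio_def gen_poisson_log_ratio_def powr_def by (simp add: ln_div)
qed

lemma gen_poisson_log_ratio_swap: "gen_poisson_log_ratio th L a t = - gen_poisson_log_ratio L th a t"
  by (simp add: gen_poisson_log_ratio_def algebra_simps)

lemma gen_poisson_log_ratio_has_real_derivative:
  assumes "0 < L" "0 < th" "0 \<le> a" "0 \<le> t"
  shows "(gen_poisson_log_ratio L th a has_real_derivative
     (ln (L + t * a) - ln (th + t * a)) + (t - 1) * (a / (L + t * a) - a / (th + t * a))) (at t)"
proof -
  have "0 < L + t * a" "0 < th + t * a"
    using assms by (simp_all add: add_pos_nonneg)
  then show ?thesis
    unfolding gen_poisson_log_ratio_def[abs_def]
    by - (rule derivative_eq_intros refl | simp)+
qed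

text \<open>The derivative is bounded below via \<open>ln x \<le> x - 1\<close>, applied to \<open>x = (th + t a) / (L + t a)\<close>.\<close>
lemma gen_poisson_log_ratio_deriv_nonneg:
  fixes L th a t :: real
  assumes "0 < L" "0 < th" "0 \<le> a" "0 \<le> t" "th \<le> L"
  shows "0 \<le> (ln (L + t * a) - ln (th + t * a)) + (t - 1) * (a / (L + t * a) - a / (th + t * a))"
proof -
  have u: "0 < L + t * a" and v: "0 < th + t * a"
    using assms by (simp_all add: add_pos_nonneg)
  have "ln ((th + t * a) / (L + t * a)) \<le> (th + t * a) / (L + t * a) - 1"
    using u v by (intro ln_le_minus_one) simp
  then have "(L - th) / (L + t * a) \<le> ln (L + t * a) - ln (th + t * a)"
    using u v by (simp add: ln_div field_simps)
  moreover have "(L - th) / (L + t * a) + (t - 1) * (a / (L + t * a) - a / (th + t * a))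
      = (L - th) * (th + a) / ((L + t * a) * (th + t * a))"
    using u v by (simp add: divide_simps) (simp add: algebra_simps)
  moreover have "0 \<le> (L - th) * (th + a) / ((L + t * a) * (th + t * a))"
    using u v assms by (intro divide_nonneg_pos mult_nonneg_nonneg) auto
  ultimately show ?thesis
    by linarith
qed

lemma gen_poisson_log_ratio_mono:
  assumes "0 < L" "0 < th" "0 \<le> a" "0 \<le> s" "s \<le> t" "th \<le> L"
  shows "gen_poisson_log_ratio L th a s \<le> gen_poisson_log_ratio L th a t"
proof (rule DERIV_nonneg_imp_increasing_open[OF \<open>s \<le> t\<close>])
  fix x assume "s < x" "x < t"
  then have "0 \<le> x"
    using assms by simp
  then show "\<exists>y. (gen_poisson_log_ratio L th a has_real_derivative y) (at x) \<and> 0 \<le> y"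
    using gen_poisson_log_ratio_has_real_derivative[OF assms(1-3) \<open>0 \<le> x\<close>]
      gen_poisson_log_ratio_deriv_nonneg[OF assms(1-3) \<open>0 \<le> x\<close> assms(6)]
    by blast
next
  show "continuous_on {s..t} (gen_poisson_log_ratio L th a)"
    using assms by (intro continuous_at_imp_continuous_on ballI
        DERIV_continuous[OF gen_poisson_log_ratio_has_real_derivative]) auto
qed

lemma gen_poisson_ratio_mono:
  assumes "0 < L" "0 < th" "0 \<le> a" "0 \<le> s" "s \<le> t" "th \<le> L"
  shows "gen_poisson_ratio L th a s \<le> gen_poisson_ratio L th a t"
  using gen_poisson_log_ratio_mono[OF assms] assms
  by (simp only: gen_poisson_ratio_eq_exp[OF assms(1-3)] order_trans[OF assms(4,5)])
     (intro mult_left_mono, auto)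

lemma gen_poisson_ratio_antimono:
  assumes "0 < L" "0 < th" "0 \<le> a" "0 \<le> s" "s \<le> t" "L \<le> th"
  shows "gen_poisson_ratio L th a t \<le> gen_poisson_ratio L th a s"
proof -
  have "gen_poisson_log_ratio L th a t \<le> gen_poisson_log_ratio L th a s"
    using gen_poisson_log_ratio_mono[of th L a s t] assms
      gen_poisson_log_ratio_swap[of th L a s] gen_poisson_log_ratio_swap[of th L a t]
    by linarith
  then show ?thesis
    using assms
    by (simp only: gen_poisson_ratio_eq_exp[OF assms(1-3)] order_trans[OF assms(4,5)])
       (intro mult_left_mono, auto)
qed

section \<open>Tail bounds for sums of independent samples\<close>

context prob_space
begin

lemma sums_prob_nat_eq:
  fixes S :: "'a \<Rightarrow> nat"
  assumes "\<And>j. {\<omega> \<in> space M. S \<omega> = j} \<in> events"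
  shows "(\<lambda>j. prob {\<omega> \<in> space M. S \<omega> = j}) sums 1"
proof -
  have "(\<lambda>j. prob {\<omega> \<in> space M. S \<omega> = j}) sums prob (\<Union>j. {\<omega> \<in> space M. S \<omega> = j})"
    using assms by (intro finite_measure_UNION) (auto simp: disjoint_family_on_def)
  moreover have "(\<Union>j. {\<omega> \<in> space M. S \<omega> = j}) = space M"
    by auto
  ultimately show ?thesis
    by (simp add: prob_space)
qed

lemma prob_add_indep_eq_convolution:
  fixes S Y :: "'a \<Rightarrow> nat"
  assumes indep: "indep_var borel (\<lambda>\<omega>. real (Y \<omega>)) borel (\<lambda>\<omega>. real (S \<omega>))"
  shows "prob {\<omega> \<in> space M. S \<omega> + Y \<omega> = x}
    = (\<Sum>k\<le>x. prob {\<omega> \<in> space M. S \<omega> = k} * prob {\<omega> \<in> space M. Y \<omega> = x - k})"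
proof -
  have level_set: "{\<omega> \<in> space M. Z \<omega> = k} = (\<lambda>\<omega>. real (Z \<omega>)) -` {real k} \<inter> space M"
    for Z :: "'a \<Rightarrow> nat" and k
    by auto
  have ev: "{\<omega> \<in> space M. S \<omega> = k} \<in> events" "{\<omega> \<in> space M. Y \<omega> = k} \<in> events" for k
    unfolding level_set
    by (rule measurable_sets[OF indep_var_rv2[OF indep]], simp)
       (rule measurable_sets[OF indep_var_rv1[OF indep]], simp)
  have indep_events:
    "prob ({\<omega> \<in> space M. S \<omega> = k} \<inter> {\<omega> \<in> space M. Y \<omega> = j})
      = prob {\<omega> \<in> space M. S \<omega> = k} * prob {\<omega> \<in> space M. Y \<omega> = j}" for k j
  proof -
    have "(\<lambda>\<omega>. (real (Y \<omega>), real (S \<omega>))) -` ({real j} \<times> {real k}) \<inter> space M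
        = {\<omega> \<in> space M. S \<omega> = k} \<inter> {\<omega> \<in> space M. Y \<omega> = j}"
      by auto
    then show ?thesis
      using indep_varD[OF indep, of "{real j}" "{real k}"] by (simp add: level_set mult.commute)
  qed
  have "{\<omega> \<in> space M. S \<omega> + Y \<omega> = x}
      = (\<Union>k\<le>x. {\<omega> \<in> space M. S \<omega> = k} \<inter> {\<omega> \<in> space M. Y \<omega> = x - k})"
    by auto
  then have "prob {\<omega> \<in> space M. S \<omega> + Y \<omega> = x}
      = (\<Sum>k\<le>x. prob ({\<omega> \<in> space M. S \<omega> = k} \<inter> {\<omega> \<in> space M. Y \<omega> = x - k}))"
    using ev by (auto intro!: finite_measure_finite_Union simp: disjoint_family_on_def)
  then show ?thesis
    by (simp add: indep_events)
qed

lemma prob_nat_le_eq_sum: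
  fixes S :: "'a \<Rightarrow> nat"
  assumes "\<And>j. {\<omega> \<in> space M. S \<omega> = j} \<in> events" and "0 \<le> c"
  shows "prob {\<omega> \<in> space M. real (S \<omega>) \<le> c} = (\<Sum>j\<le>nat \<lfloor>c\<rfloor>. prob {\<omega> \<in> space M. S \<omega> = j})"
proof -
  have "{\<omega> \<in> space M. real (S \<omega>) \<le> c} = (\<Union>j\<le>nat \<lfloor>c\<rfloor>. {\<omega> \<in> space M. S \<omega> = j})"
    using \<open>0 \<le> c\<close> by (auto simp: le_nat_iff le_floor_iff)
  then show ?thesis
    using assms(1) by (auto intro: finite_measure_finite_Union simp: disjoint_family_on_def)
qed

lemma prob_le_gen_poisson_ratio:
  fixes S :: "'a \<Rightarrow> nat"
  assumes ev: "\<And>j. {\<omega> \<in> space M. S \<omega> = j} \<in> events"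
    and distr: "\<And>j. prob {\<omega> \<in> space M. S \<omega> = j} = gen_poisson_pmf L a j"
    and L: "0 < L" and th: "0 < th" and a: "0 \<le> a" and "th \<le> L" and "0 \<le> c"
  shows "prob {\<omega> \<in> space M. real (S \<omega>) \<le> c}
    \<le> gen_poisson_ratio L th a c * (\<Sum>j\<le>nat \<lfloor>c\<rfloor>. gen_poisson_pmf th a j)"
proof -
  have "prob {\<omega> \<in> space M. real (S \<omega>) \<le> c}
      = (\<Sum>j\<le>nat \<lfloor>c\<rfloor>. gen_poisson_ratio L th a (real j) * gen_poisson_pmf th a j)"
    using prob_nat_le_eq_sum[OF ev \<open>0 \<le> c\<close>] distr gen_poisson_pmf_eq_ratio_mult[OF L th a]
    by simp
  also have "\<dots> \<le> (\<Sum>j\<le>nat \<lfloor>c\<rfloor>. gen_poisson_ratio L th a c * gen_poisson_pmf th a j)"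
  proof (rule sum_mono)
    fix j assume "j \<in> {..nat \<lfloor>c\<rfloor>}"
    then have "real j \<le> c"
      using \<open>0 \<le> c\<close> by (simp add: le_nat_iff le_floor_iff)
    then show "gen_poisson_ratio L th a (real j) * gen_poisson_pmf th a j
        \<le> gen_poisson_ratio L th a c * gen_poisson_pmf th a j"
      using assms gen_poisson_pmf_nonneg by (intro mult_right_mono gen_poisson_ratio_mono) auto
  qed
  finally show ?thesis
    by (simp add: sum_distrib_left)
qed

lemma prob_ge_gen_poisson_ratio:
  fixes S :: "'a \<Rightarrow> nat"
  assumes ev: "\<And>j. {\<omega> \<in> space M. S \<omega> = j} \<in> events"
    and distr: "\<And>j. prob {\<omega> \<in> space M. S \<omega> = j} = gen_poisson_pmf L a j"
    and L: "0 < L" and th: "0 < th" and a: "0 \<le> a" and "L \<le> th" and "0 \<le> c"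
    and sums_L: "gen_poisson_pmf L a sums 1" and summable_th: "summable (gen_poisson_pmf th a)"
  shows "prob {\<omega> \<in> space M. c \<le> real (S \<omega>)}
    \<le> gen_poisson_ratio L th a c * (\<Sum>j. gen_poisson_pmf th a (j + nat \<lceil>c\<rceil>))"
proof -
  define N where "N = nat \<lceil>c\<rceil>"
  have N: "c \<le> real j \<longleftrightarrow> N \<le> j" for j
    unfolding N_def using \<open>0 \<le> c\<close> by (simp add: nat_le_iff ceiling_le_iff)
  have "{\<omega> \<in> space M. c \<le> real (S \<omega>)} = space M - (\<Union>j<N. {\<omega> \<in> space M. S \<omega> = j})"
    using N by auto
  moreover have "prob (\<Union>j<N. {\<omega> \<in> space M. S \<omega> = j}) = (\<Sum>j<N. prob {\<omega> \<in> space M. S \<omega> = j})"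
    using ev by (auto intro: finite_measure_finite_Union simp: disjoint_family_on_def)
  ultimately have "prob {\<omega> \<in> space M. c \<le> real (S \<omega>)} = 1 - (\<Sum>j<N. gen_poisson_pmf L a j)"
    using ev distr by (simp add: prob_compl sets.finite_UN)
  also have "\<dots> = (\<Sum>j. gen_poisson_pmf L a (j + N))"
    using suminf_split_initial_segment[of "gen_poisson_pmf L a" N] sums_L by (simp add: sums_iff)
  also have "\<dots> \<le> (\<Sum>j. gen_poisson_ratio L th a c * gen_poisson_pmf th a (j + N))"
  proof (rule suminf_le)
    fix j
    have "c \<le> real (j + N)"
      using N[of "j + N"] by simp
    then show "gen_poisson_pmf L a (j + N) \<le> gen_poisson_ratio L th a c * gen_poisson_pmf th a (j + N)"
      unfolding gen_poisson_pmf_eq_ratio_mult[OF L th a, of "j + N"]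
      using assms gen_poisson_pmf_nonneg by (intro mult_right_mono gen_poisson_ratio_antimono) auto
  next
    show "summable (\<lambda>j. gen_poisson_pmf L a (j + N))"
      using sums_L summable_iff_shift[of "gen_poisson_pmf L a" N] by (simp add: sums_iff)
    show "summable (\<lambda>j. gen_poisson_ratio L th a c * gen_poisson_pmf th a (j + N))"
      using summable_th summable_iff_shift[of "gen_poisson_pmf th a" N] by (intro summable_mult) simp
  qed
  also have "\<dots> = gen_poisson_ratio L th a c * (\<Sum>j. gen_poisson_pmf th a (j + N))"
    using summable_th summable_iff_shift[of "gen_poisson_pmf th a" N] by (intro suminf_mult) simp
  finally show ?thesis
    by (simp add: N_def)
qed

end

locale gen_poisson_sample = prob_space M for M :: "'a measure" +
  fixes X :: "nat \<Rightarrow> 'a \<Rightarrow> nat" and lam alpha :: real and n :: nat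
  assumes lam_pos: "lam > 0" and alpha_nonneg: "0 \<le> alpha" and alpha_less_1: "alpha < 1"
    and n_ge_1: "n \<ge> 1"
    and X_measurable: "\<And>i. i < n \<Longrightarrow> X i \<in> measurable M (count_space UNIV)"
    and X_indep: "indep_vars (\<lambda>_. count_space UNIV) X {..<n}"
    and X_distr: "\<And>i x. i < n \<Longrightarrow> prob {\<omega> \<in> space M. X i \<omega> = x} = gen_poisson_pmf lam alpha x"
begin

lemma real_X_measurable:
  assumes "i < n"
  shows "(\<lambda>\<omega>. real (X i \<omega>)) \<in> borel_measurable M"
proof -
  have "real \<in> measurable (count_space UNIV) borel"
    by (simp add: measurable_count_space_eq1)
  with X_measurable[OF assms] show ?thesis
    by (rule measurable_compose)
qed

lemma sum_events: "{\<omega> \<in> space M. (\<Sum>i<m. X i \<omega>) = j} \<in> events" if "m \<le> n"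
proof -
  have "(\<lambda>\<omega>. \<Sum>i<m. real (X i \<omega>)) \<in> borel_measurable M"
    using that real_X_measurable by (intro borel_measurable_sum) auto
  moreover have "{\<omega> \<in> space M. (\<Sum>i<m. X i \<omega>) = j} = (\<lambda>\<omega>. \<Sum>i<m. real (X i \<omega>)) -` {real j} \<inter> space M"
    by (auto simp flip: of_nat_sum)
  ultimately show ?thesis
    by simp
qed

lemma sums_gen_poisson_pmf: "gen_poisson_pmf lam alpha sums 1"
proof -
  have "X 0 \<in> measurable M (count_space UNIV)"
    using X_measurable n_ge_1 by simp
  then have "{\<omega> \<in> space M. X 0 \<omega> = j} \<in> events" for j
    by measurable
  then show ?thesis
    using sums_prob_nat_eq[of "X 0"] X_distr[of 0] n_ge_1 by simp
qed

lemma sum_distribution: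
  "prob {\<omega> \<in> space M. (\<Sum>i<n. X i \<omega>) = j} = gen_poisson_pmf (real n * lam) alpha j"
proof -
  have real_indep: "indep_vars (\<lambda>_. borel) (\<lambda>i \<omega>. real (X i \<omega>)) {..<n}"
    using X_indep by (rule indep_vars_compose2) simp
  have "prob {\<omega> \<in> space M. (\<Sum>i<Suc m. X i \<omega>) = j} = gen_poisson_pmf (real (Suc m) * lam) alpha j"
    if "Suc m \<le> n" for m j
    using that
  proof (induction m arbitrary: j)
    case 0
    then show ?case
      using X_distr[of 0] by simp
  next
    case (Suc m)
    have "indep_var borel (\<lambda>\<omega>. real (X (Suc m) \<omega>)) borel (\<lambda>\<omega>. \<Sum>i<Suc m. real (X i \<omega>))"
      using Suc.prems by (intro indep_vars_sum indep_vars_subset[OF real_indep]) auto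
    then have "prob {\<omega> \<in> space M. (\<Sum>i<Suc m. X i \<omega>) + X (Suc m) \<omega> = j}
        = (\<Sum>k\<le>j. gen_poisson_pmf (real (Suc m) * lam) alpha k * gen_poisson_pmf lam alpha (j - k))"
      using Suc X_distr by (simp add: prob_add_indep_eq_convolution flip: of_nat_sum)
    also have "\<dots> = gen_poisson_pmf (real (Suc m) * lam + lam) alpha j"
      using lam_pos alpha_nonneg by (intro gen_poisson_pmf_convolution) simp_all
    also have "real (Suc m) * lam + lam = real (Suc (Suc m)) * lam"
      by (simp add: algebra_simps)
    finally show ?case
      by simp
  qed
  moreover obtain m where "n = Suc m"
    using n_ge_1 by (cases n) auto
  ultimately show ?thesis
    by simp
qed

lemma sums_gen_poisson_pmf_scaled: "gen_poisson_pmf (real n * lam) alpha sums 1"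
  using sums_prob_nat_eq[OF sum_events[OF order_refl]] by (simp add: sum_distribution)

end

text \<open>\<open>w\<close> is the free parameter of the comparison law \<open>gen_poisson_pmf (n w) a\<close>.\<close>
definition gen_poisson_mean_bound :: "nat \<Rightarrow> real \<Rightarrow> real \<Rightarrow> real \<Rightarrow> real \<Rightarrow> real" where
  "gen_poisson_mean_bound n lam a w z =
     lam * (w + z * a) / (w * (lam + z * a)) * (((lam + z * a) / (w + z * a)) powr z * exp w / exp lam) ^ n"

lemma gen_poisson_ratio_scale:
  assumes lam: "0 < lam" and w: "0 < w" and z: "0 < z" and a: "0 \<le> a" and "0 < n"
  shows "gen_poisson_ratio (real n * lam) (real n * w) a (real n * z) = gen_poisson_mean_bound n lam a w z"
proof -
  define q where "q = (lam + z * a) / (w + z * a)"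
  have wz: "0 < w + z * a" "0 < lam + z * a"
    using w lam z a by (simp_all add: add_pos_nonneg)
  then have q: "0 < q"
    by (simp add: q_def)
  have "real n * lam + real n * z * a = real n * (lam + z * a)"
       "real n * w + real n * z * a = real n * (w + z * a)"
    by (simp_all add: algebra_simps)
  then have "(real n * lam + real n * z * a) / (real n * w + real n * z * a) = q"
    using \<open>0 < n\<close> by (simp add: q_def)
  moreover have "q powr (real n * z - 1) = (q powr z) ^ n / q"
    using q by (simp add: powr_diff powr_power mult.commute)
  moreover have "exp (real n * w - real n * lam) = (exp w / exp lam) ^ n"
    by (simp add: exp_diff[symmetric] exp_of_nat_mult[symmetric] algebra_simps)
  ultimately have "gen_poisson_ratio (real n * lam) (real n * w) a (real n * z)
      = (lam / w) * (q powr z) ^ n / q * (exp w / exp lam) ^ n"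
    unfolding gen_poisson_ratio_def using \<open>0 < n\<close> by (simp add: mult.assoc)
  also have "\<dots> = gen_poisson_mean_bound n lam a w z"
    unfolding gen_poisson_mean_bound_def using wz w by (simp add: q_def power_mult_distrib field_simps)
  finally show ?thesis .
qed

lemma gen_poisson_mean_bound_nonneg: "0 < lam \<Longrightarrow> 0 < w \<Longrightarrow> 0 < z \<Longrightarrow> 0 \<le> a \<Longrightarrow> 0 \<le> gen_poisson_mean_bound n lam a w z"
  unfolding gen_poisson_mean_bound_def by (simp add: add_pos_nonneg)

lemma gen_poisson_mean_bound_linear:
  assumes "0 < z"
  shows "gen_poisson_mean_bound n lam a ((1 - a) * z) z
    = lam / ((1 - a) * (lam + z * a)) * ((lam / z + a) powr z * exp ((1 - a) * z) / exp lam) ^ n"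
proof -
  have "(1 - a) * z + z * a = z"
    by (simp add: algebra_simps)
  moreover have "(lam + z * a) / z = lam / z + a"
    using assms by (simp add: field_simps)
  ultimately show ?thesis
    using assms by (simp add: gen_poisson_mean_bound_def)
qed

lemma gen_poisson_mean_bound_poisson:
  assumes "0 < lam" "0 < z"
  shows "gen_poisson_mean_bound n lam 0 z z = (lam powr z * exp z / (z powr z * exp lam)) ^ n"
  using assms by (simp add: gen_poisson_mean_bound_def powr_divide)

lemma quadratic_root_le:
  fixes b c x :: real
  assumes "0 \<le> c" "0 < x" "c \<le> x\<^sup>2 - b * x"
  shows "(b + sqrt (b\<^sup>2 + 4 * c)) / 2 \<le> x"
proof -
  have "b * x \<le> x * x"
    using assms unfolding power2_eq_square by linarith
  then have "b \<le> x"
    using \<open>0 < x\<close> by (rule mult_right_le_imp_le)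
  moreover have "b\<^sup>2 + 4 * c \<le> (2 * x - b)\<^sup>2"
    using assms by (simp add: power2_eq_square algebra_simps)
  ultimately have "sqrt (b\<^sup>2 + 4 * c) \<le> 2 * x - b"
    using assms by (intro real_le_lsqrt) auto
  then show ?thesis
    by simp
qed

lemma le_quadratic_root:
  fixes b c x :: real
  assumes "x\<^sup>2 - b * x \<le> c"
  shows "x \<le> (b + sqrt (b\<^sup>2 + 4 * c)) / 2"
proof (cases "2 * x - b \<le> 0")
  case True
  have "0 \<le> b\<^sup>2 + 4 * c"
  proof -
    have "(2 * x - b)\<^sup>2 = b\<^sup>2 + 4 * x\<^sup>2 - 4 * (b * x)"
      by (simp add: power2_eq_square algebra_simps)
    then show ?thesis
      using assms zero_le_power2[of "2 * x - b"] by linarith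
  qed
  then have "0 \<le> sqrt (b\<^sup>2 + 4 * c)"
    by simp
  with True show ?thesis
    by (simp only: le_divide_eq_numeral1)
next
  case False
  have "(2 * x - b)\<^sup>2 \<le> b\<^sup>2 + 4 * c"
    using assms by (simp add: power2_eq_square algebra_simps)
  then have "2 * x - b \<le> sqrt (b\<^sup>2 + 4 * c)"
    using False by (intro real_le_rsqrt) auto
  then show ?thesis
    by simp
qed

context gen_poisson_sample
begin

lemma mean_le_iff:
  "(\<Sum>i<n. real (X i \<omega>)) / real n \<le> z \<longleftrightarrow> real (\<Sum>i<n. X i \<omega>) \<le> real n * z"
  and mean_ge_iff:
  "z \<le> (\<Sum>i<n. real (X i \<omega>)) / real n \<longleftrightarrow> real n * z \<le> real (\<Sum>i<n. X i \<omega>)"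
  using n_ge_1 by (simp_all add: pos_divide_le_eq pos_le_divide_eq mult.commute)

lemma prob_mean_le_ratio:
  assumes "0 < w" "w \<le> lam" "0 < z"
  shows "prob {\<omega> \<in> space M. (\<Sum>i<n. real (X i \<omega>)) / real n \<le> z}
    \<le> gen_poisson_mean_bound n lam alpha w z * (\<Sum>j\<le>nat \<lfloor>real n * z\<rfloor>. gen_poisson_pmf (real n * w) alpha j)"
  using prob_le_gen_poisson_ratio[OF sum_events[OF order_refl] sum_distribution, of "real n * w" "real n * z"]
    assms lam_pos alpha_nonneg n_ge_1
  by (simp add: mean_le_iff gen_poisson_ratio_scale)

lemma prob_mean_ge_ratio:
  assumes "lam \<le> w" "0 < z"
  shows "prob {\<omega> \<in> space M. z \<le> (\<Sum>i<n. real (X i \<omega>)) / real n}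
    \<le> gen_poisson_mean_bound n lam alpha w z * (\<Sum>j. gen_poisson_pmf (real n * w) alpha (j + nat \<lceil>real n * z\<rceil>))"
proof -
  have "0 < w"
    using assms lam_pos by simp
  then have "summable (gen_poisson_pmf (real n * w) alpha)"
    using suminf_gen_poisson_pmf_le_1(1)[OF lam_pos alpha_nonneg sums_gen_poisson_pmf] n_ge_1 by simp
  then show ?thesis
    using prob_ge_gen_poisson_ratio[OF sum_events[OF order_refl] sum_distribution, of "real n * w" "real n * z"]
      assms \<open>0 < w\<close> lam_pos alpha_nonneg n_ge_1 sums_gen_poisson_pmf_scaled
    by (simp add: mean_ge_iff gen_poisson_ratio_scale)
qed

lemma sum_gen_poisson_pmf_le_1: "0 < t \<Longrightarrow> (\<Sum>j\<le>N. gen_poisson_pmf t alpha j) \<le> 1"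
  using sum_le_suminf[OF suminf_gen_poisson_pmf_le_1(1)[OF lam_pos alpha_nonneg sums_gen_poisson_pmf]]
    suminf_gen_poisson_pmf_le_1(2)[OF lam_pos alpha_nonneg sums_gen_poisson_pmf]
    gen_poisson_pmf_nonneg[OF _ alpha_nonneg]
  by (meson finite_atMost order_trans)

lemma suminf_shift_gen_poisson_pmf_le_1:
  assumes "0 < t"
  shows "(\<Sum>j. gen_poisson_pmf t alpha (j + N)) \<le> 1"
proof -
  note mass = suminf_gen_poisson_pmf_le_1[OF lam_pos alpha_nonneg sums_gen_poisson_pmf assms]
  have "0 \<le> (\<Sum>j<N. gen_poisson_pmf t alpha j)"
    using assms alpha_nonneg by (intro sum_nonneg gen_poisson_pmf_nonneg)
  then show ?thesis
    using suminf_split_initial_segment[OF mass(1), of N] mass(2) by linarith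
qed

lemma prob_mean_le_bound:
  assumes "0 < w" "w \<le> lam" "0 < z"
  shows "prob {\<omega> \<in> space M. (\<Sum>i<n. real (X i \<omega>)) / real n \<le> z} \<le> gen_poisson_mean_bound n lam alpha w z"
proof -
  have "(\<Sum>j\<le>nat \<lfloor>real n * z\<rfloor>. gen_poisson_pmf (real n * w) alpha j) \<le> 1"
    using assms n_ge_1 by (intro sum_gen_poisson_pmf_le_1) simp
  moreover have "0 \<le> gen_poisson_mean_bound n lam alpha w z"
    using assms lam_pos alpha_nonneg by (simp add: gen_poisson_mean_bound_nonneg)
  ultimately show ?thesis
    using prob_mean_le_ratio[OF assms] by (meson mult_left_le order_trans)
qed

lemma prob_mean_ge_bound:
  assumes "lam \<le> w" "0 < z"
  shows "prob {\<omega> \<in> space M. z \<le> (\<Sum>i<n. real (X i \<omega>)) / real n} \<le> gen_poisson_mean_bound n lam alpha w z"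
proof -
  have "0 < w"
    using assms lam_pos by simp
  then have "(\<Sum>j. gen_poisson_pmf (real n * w) alpha (j + nat \<lceil>real n * z\<rceil>)) \<le> 1"
    using n_ge_1 by (intro suminf_shift_gen_poisson_pmf_le_1) simp
  moreover have "0 \<le> gen_poisson_mean_bound n lam alpha w z"
    using assms \<open>0 < w\<close> lam_pos alpha_nonneg by (simp add: gen_poisson_mean_bound_nonneg)
  ultimately show ?thesis
    using prob_mean_ge_ratio[OF assms] by (meson mult_left_le order_trans)
qed

lemma prob_mean_le_linear:
  assumes "0 < z" "z \<le> lam / (1 - alpha)"
  shows "prob {\<omega> \<in> space M. (\<Sum>i<n. real (X i \<omega>)) / real n \<le> z}
    \<le> lam / ((1 - alpha) * (lam + z * alpha)) * ((lam / z + alpha) powr z * exp ((1 - alpha) * z) / exp lam) ^ n"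
proof -
  have "(1 - alpha) * z \<le> lam"
    using assms alpha_less_1 by (simp add: le_divide_eq mult.commute)
  then show ?thesis
    using prob_mean_le_bound[of "(1 - alpha) * z" z] assms alpha_less_1
    by (simp add: gen_poisson_mean_bound_linear)
qed

lemma prob_mean_ge_linear:
  assumes "lam / (1 - alpha) \<le> z"
  shows "prob {\<omega> \<in> space M. z \<le> (\<Sum>i<n. real (X i \<omega>)) / real n}
    \<le> lam / ((1 - alpha) * (lam + z * alpha)) * ((lam / z + alpha) powr z * exp ((1 - alpha) * z) / exp lam) ^ n"
proof -
  have "0 < lam / (1 - alpha)"
    using lam_pos alpha_less_1 by simp
  then have "0 < z"
    using assms by linarith
  moreover have "lam \<le> (1 - alpha) * z"
    using assms alpha_less_1 by (simp add: divide_le_eq mult.commute)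
  ultimately show ?thesis
    using prob_mean_ge_bound[of "(1 - alpha) * z" z] by (simp add: gen_poisson_mean_bound_linear)
qed

text \<open>\<open>\<nu>\<close> below is the positive root of \<open>w\<^sup>2 - (1 - alpha) z w - z alpha / n\<close>, so that
  comparing \<open>\<nu>\<close> with \<open>lam\<close> amounts to comparing \<open>z\<close> with \<open>lam / (1 - alpha + alpha / (n lam))\<close>.\<close>
lemma nu_eq_quadratic_root:
  "((1 - alpha) * z + sqrt ((1 - alpha)^2 * z^2 + 4 * z * alpha / real n)) / 2
    = ((1 - alpha) * z + sqrt (((1 - alpha) * z)\<^sup>2 + 4 * (z * alpha / real n))) / 2"
  by (simp add: power_mult_distrib)

lemma nu_threshold_iff:
  "z \<le> lam / (1 - alpha + alpha / (real n * lam)) \<longleftrightarrow> z * alpha / real n \<le> lam\<^sup>2 - (1 - alpha) * z * lam"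
  "lam / (1 - alpha + alpha / (real n * lam)) \<le> z \<longleftrightarrow> lam\<^sup>2 - (1 - alpha) * z * lam \<le> z * alpha / real n"
proof -
  define D where "D = 1 - alpha + alpha / (real n * lam)"
  have D: "0 < D"
    unfolding D_def using alpha_nonneg alpha_less_1 lam_pos n_ge_1 by (simp add: add_pos_nonneg)
  have eq: "lam * (z * D) = (1 - alpha) * z * lam + z * alpha / real n"
    unfolding D_def using lam_pos n_ge_1 by (simp add: field_simps)
  have "z \<le> lam / D \<longleftrightarrow> lam * (z * D) \<le> lam * lam"
    using D lam_pos by (simp add: le_divide_eq)
  also have "\<dots> \<longleftrightarrow> z * alpha / real n \<le> lam\<^sup>2 - (1 - alpha) * z * lam"
    unfolding eq power2_eq_square by linarith
  finally show "z \<le> lam / D \<longleftrightarrow> z * alpha / real n \<le> lam\<^sup>2 - (1 - alpha) * z * lam" .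
  have "lam / D \<le> z \<longleftrightarrow> lam * lam \<le> lam * (z * D)"
    using D lam_pos by (simp add: divide_le_eq)
  also have "\<dots> \<longleftrightarrow> lam\<^sup>2 - (1 - alpha) * z * lam \<le> z * alpha / real n"
    unfolding eq power2_eq_square by linarith
  finally show "lam / D \<le> z \<longleftrightarrow> lam\<^sup>2 - (1 - alpha) * z * lam \<le> z * alpha / real n" .
qed

lemma prob_mean_le_nu:
  assumes "0 < z" "z \<le> lam / (1 - alpha + alpha / (real n * lam))"
  shows "prob {\<omega> \<in> space M. (\<Sum>i<n. real (X i \<omega>)) / real n \<le> z}
    \<le> gen_poisson_mean_bound n lam alpha
         (((1 - alpha) * z + sqrt ((1 - alpha)^2 * z^2 + 4 * z * alpha / real n)) / 2) z"
proof (rule prob_mean_le_bound)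
  have "0 < (1 - alpha) * z"
    using assms alpha_less_1 by simp
  then show "0 < ((1 - alpha) * z + sqrt ((1 - alpha)^2 * z^2 + 4 * z * alpha / real n)) / 2"
    using assms alpha_nonneg by (simp add: add_pos_nonneg)
  show "((1 - alpha) * z + sqrt ((1 - alpha)^2 * z^2 + 4 * z * alpha / real n)) / 2 \<le> lam"
    unfolding nu_eq_quadratic_root using assms alpha_nonneg lam_pos nu_threshold_iff(1)
    by (intro quadratic_root_le) simp_all
qed (use assms in simp)

lemma prob_mean_ge_nu:
  assumes "lam / (1 - alpha + alpha / (real n * lam)) \<le> z"
  shows "prob {\<omega> \<in> space M. z \<le> (\<Sum>i<n. real (X i \<omega>)) / real n}
    \<le> gen_poisson_mean_bound n lam alpha
         (((1 - alpha) * z + sqrt ((1 - alpha)^2 * z^2 + 4 * z * alpha / real n)) / 2) z"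
proof (rule prob_mean_ge_bound)
  have "0 < 1 - alpha + alpha / (real n * lam)"
    using alpha_nonneg alpha_less_1 lam_pos n_ge_1 by (simp add: add_pos_nonneg)
  then have "0 < lam / (1 - alpha + alpha / (real n * lam))"
    using lam_pos by simp
  then show "0 < z"
    using assms by linarith
  show "lam \<le> ((1 - alpha) * z + sqrt ((1 - alpha)^2 * z^2 + 4 * z * alpha / real n)) / 2"
    unfolding nu_eq_quadratic_root using assms nu_threshold_iff(2)
    by (intro le_quadratic_root) simp
qed

end

section \<open>Moments of the Poisson distribution\<close>

lemma gen_poisson_pmf_0_eq_poisson: "0 < z \<Longrightarrow> gen_poisson_pmf z 0 k = pmf (poisson_pmf z) k"
  by (cases k) (simp_all add: gen_poisson_pmf_eq_abel_coeff abel_coeff_def)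

lemma sums_poisson_pmf:
  assumes "0 < z"
  shows "pmf (poisson_pmf z) sums 1"
proof -
  have "(\<lambda>k. z ^ k /\<^sub>R fact k * exp (- z)) sums (exp z * exp (- z))"
    by (intro sums_mult2 exp_converges)
  moreover have "pmf (poisson_pmf z) = (\<lambda>k. z ^ k /\<^sub>R fact k * exp (- z))"
    using assms by (simp add: fun_eq_iff divide_inverse)
  ultimately show ?thesis
    by (simp add: mult_exp_exp)
qed

lemma fact_add_eq_fact_mult_prod: "fact (i + r) = fact i * (\<Prod>l<r. real (i + r) - real l)"
proof (induction r)
  case 0
  then show ?case by simp
next
  case (Suc r)
  have "(\<Prod>l<Suc r. real (i + Suc r) - real l) = real (i + Suc r) * (\<Prod>l<r. real (i + r) - real l)"
    by (simp only: prod.lessThan_Suc_shift) (simp add: algebra_simps)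
  then show ?case
    using Suc by (simp add: algebra_simps)
qed

lemma poisson_factorial_moment:
  assumes "0 < z"
  shows "(\<lambda>k. pmf (poisson_pmf z) k * (\<Prod>l<r. real k - real l)) sums z ^ r"
proof -
  have "(\<lambda>i. pmf (poisson_pmf z) (i + r) * (\<Prod>l<r. real (i + r) - real l)) = (\<lambda>i. z ^ r * pmf (poisson_pmf z) i)"
  proof
    fix i
    have "fact (i + r) \<noteq> (0::real)"
      by simp
    then show "pmf (poisson_pmf z) (i + r) * (\<Prod>l<r. real (i + r) - real l) = z ^ r * pmf (poisson_pmf z) i"
      using assms fact_add_eq_fact_mult_prod[of i r] by (simp add: power_add field_simps)
  qed
  moreover have "(\<lambda>i. z ^ r * pmf (poisson_pmf z) i) sums z ^ r"
    using sums_mult[OF sums_poisson_pmf[OF assms], of "z ^ r"] by simp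
  moreover have "(\<Sum>i<r. pmf (poisson_pmf z) i * (\<Prod>l<r. real i - real l)) = 0"
    by (intro sum.neutral ballI) (auto intro: prod_zero)
  ultimately show ?thesis
    using sums_iff_shift[of "\<lambda>k. pmf (poisson_pmf z) k * (\<Prod>l<r. real k - real l)" r "z ^ r"] by simp
qed

text \<open>Powers of \<open>k - z\<close> are rewritten in the falling factorials of \<open>k\<close>, whose Poisson
  expectations are powers of \<open>z\<close>.\<close>
lemma poisson_central_moments:
  assumes "0 < z"
  shows "(\<lambda>k. pmf (poisson_pmf z) k * (real k - z)) sums 0"
    and "(\<lambda>k. pmf (poisson_pmf z) k * (real k - z)\<^sup>2) sums z"
    and "(\<lambda>k. pmf (poisson_pmf z) k * (real k - z) ^ 4) sums (3 * z\<^sup>2 + z)"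
proof -
  define p where "p = pmf (poisson_pmf z)"
  define m where "m r k = p k * (\<Prod>l<r. real k - real l)" for r k
  have m: "m r sums z ^ r" for r
    unfolding m_def p_def by (rule poisson_factorial_moment[OF assms])
  have p: "p sums 1"
    unfolding p_def by (rule sums_poisson_pmf[OF assms])
  have "(\<lambda>k. m 1 k - z * p k) sums (z ^ 1 - z * 1)"
    by (intro sums_diff m sums_mult p)
  then show "(\<lambda>k. pmf (poisson_pmf z) k * (real k - z)) sums 0"
    by (simp add: m_def p_def algebra_simps)
  have "(\<lambda>k. m 2 k + (1 - 2 * z) * m 1 k + z\<^sup>2 * p k) sums (z\<^sup>2 + (1 - 2 * z) * z ^ 1 + z\<^sup>2 * 1)"
    by (intro sums_add m sums_mult p)
  moreover have "z\<^sup>2 + (1 - 2 * z) * z ^ 1 + z\<^sup>2 * 1 = z"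
    by (simp add: power2_eq_square algebra_simps)
  ultimately show "(\<lambda>k. pmf (poisson_pmf z) k * (real k - z)\<^sup>2) sums z"
    by (simp add: m_def p_def numeral_2_eq_2 power2_eq_square algebra_simps)
  have "(\<lambda>k. m 4 k + (6 - 4 * z) * m 3 k + (7 - 12 * z + 6 * z\<^sup>2) * m 2 k
        + (1 - 4 * z + 6 * z\<^sup>2 - 4 * z ^ 3) * m 1 k + z ^ 4 * p k)
      sums (z ^ 4 + (6 - 4 * z) * z ^ 3 + (7 - 12 * z + 6 * z\<^sup>2) * z\<^sup>2
        + (1 - 4 * z + 6 * z\<^sup>2 - 4 * z ^ 3) * z ^ 1 + z ^ 4 * 1)"
    by (intro sums_add m sums_mult p)
  moreover have "z ^ 4 + (6 - 4 * z) * z ^ 3 + (7 - 12 * z + 6 * z\<^sup>2) * z\<^sup>2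
        + (1 - 4 * z + 6 * z\<^sup>2 - 4 * z ^ 3) * z ^ 1 + z ^ 4 * 1 = 3 * z\<^sup>2 + z"
    by algebra
  moreover have "m 4 k + (6 - 4 * z) * m 3 k + (7 - 12 * z + 6 * z\<^sup>2) * m 2 k
        + (1 - 4 * z + 6 * z\<^sup>2 - 4 * z ^ 3) * m 1 k + z ^ 4 * p k = p k * (real k - z) ^ 4" for k
    by (simp add: m_def numeral_eq_Suc prod.lessThan_Suc) algebra
  ultimately show "(\<lambda>k. pmf (poisson_pmf z) k * (real k - z) ^ 4) sums (3 * z\<^sup>2 + z)"
    by (simp add: p_def)
qed

definition centered_poisson :: "real \<Rightarrow> real measure" where
  "centered_poisson z = distr (measure_pmf (poisson_pmf z)) borel (\<lambda>k. real k - z)"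

lemma prob_space_centered_poisson: "prob_space (centered_poisson z)"
  unfolding centered_poisson_def
  by (intro prob_space.prob_space_distr measure_pmf.prob_space_axioms) simp

lemma sets_centered_poisson [simp, measurable_cong]: "sets (centered_poisson z) = sets borel"
  by (simp add: centered_poisson_def)

lemma integral_centered_poisson:
  assumes z: "0 < z" and h: "h \<in> borel_measurable borel"
    and sums: "(\<lambda>k. pmf (poisson_pmf z) k * h (real k - z)) sums s"
    and abs_summable: "summable (\<lambda>k. pmf (poisson_pmf z) k * \<bar>h (real k - z)\<bar>)"
  shows "integrable (centered_poisson z) h \<and> integral\<^sup>L (centered_poisson z) h = s"
proof -
  let ?p = "pmf (poisson_pmf z)"
  have eq: "centered_poisson z = distr (density (count_space UNIV) ?p) borel (\<lambda>k. real k - z)"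
    unfolding centered_poisson_def measure_pmf_eq_density ..
  have count: "integrable (count_space UNIV) (\<lambda>k. ?p k *\<^sub>R h (real k - z))"
    unfolding integrable_count_space_nat_iff using abs_summable by (simp add: abs_mult)
  then have "integrable (density (count_space UNIV) ?p) (\<lambda>k. h (real k - z))"
    by (subst integrable_density) auto
  then have "integrable (centered_poisson z) h"
    unfolding eq using h by (subst integrable_distr_eq) auto
  have "integral\<^sup>L (centered_poisson z) h = integral\<^sup>L (density (count_space UNIV) ?p) (\<lambda>k. h (real k - z))"
    unfolding eq using h by (subst integral_distr) auto
  also have "\<dots> = integral\<^sup>L (count_space UNIV) (\<lambda>k. ?p k *\<^sub>R h (real k - z))"
    by (subst integral_density) auto
  also have "\<dots> = s"
    using count sums by (simp add: integral_count_space_nat sums_iff)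
  finally show ?thesis
    using \<open>integrable (centered_poisson z) h\<close> by simp
qed

lemma summable_poisson_pmf_abs_centered:
  assumes z: "0 < z"
  shows "summable (\<lambda>k. pmf (poisson_pmf z) k * \<bar>real k - z\<bar>)"
proof -
  have square_summable: "summable (\<lambda>k. pmf (poisson_pmf z) k * (real k - z)\<^sup>2)"
    using poisson_central_moments(2)[OF z] by (simp add: sums_iff)
  have "\<bar>y\<bar> \<le> 1 + y\<^sup>2" for y :: real
  proof (cases "\<bar>y\<bar> \<le> 1")
    case False
    then have "\<bar>y\<bar> * 1 \<le> \<bar>y\<bar> * \<bar>y\<bar>"
      by (intro mult_left_mono) auto
    then show ?thesis
      by (simp add: power2_eq_square abs_mult_self_eq)
  qed (simp add: add_increasing2)
  then have "norm (pmf (poisson_pmf z) k * \<bar>real k - z\<bar>) \<le> pmf (poisson_pmf z) k + pmf (poisson_pmf z) k * (real k - z)\<^sup>2" for k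
    using mult_left_mono[of "\<bar>real k - z\<bar>" "1 + (real k - z)\<^sup>2" "pmf (poisson_pmf z) k"]
    by (simp add: distrib_left abs_mult)
  moreover have "summable (\<lambda>k. pmf (poisson_pmf z) k + pmf (poisson_pmf z) k * (real k - z)\<^sup>2)"
    using sums_poisson_pmf[OF z] square_summable by (intro summable_add) (simp_all add: sums_iff)
  ultimately show ?thesis
    by (rule summable_comparison_test'[rotated])
qed

lemma centered_poisson_moments:
  assumes z: "0 < z"
  shows "integrable (centered_poisson z) (\<lambda>x. x)" "(\<integral>x. x \<partial>centered_poisson z) = 0"
    and "integrable (centered_poisson z) (\<lambda>x. x\<^sup>2)" "(\<integral>x. x\<^sup>2 \<partial>centered_poisson z) = z"
    and "integrable (centered_poisson z) (\<lambda>x. x ^ 4)" "(\<integral>x. x ^ 4 \<partial>centered_poisson z) = 3 * z\<^sup>2 + z"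
proof -
  note sums = poisson_central_moments[OF z]
  have square_summable: "summable (\<lambda>k. pmf (poisson_pmf z) k * (real k - z)\<^sup>2)"
    using sums(2) by (simp add: sums_iff)
  have "integrable (centered_poisson z) (\<lambda>x. x\<^sup>2) \<and> (\<integral>x. x\<^sup>2 \<partial>centered_poisson z) = z"
    by (rule integral_centered_poisson[OF z _ sums(2)]) (use square_summable in auto)
  then show "integrable (centered_poisson z) (\<lambda>x. x\<^sup>2)" "(\<integral>x. x\<^sup>2 \<partial>centered_poisson z) = z"
    by simp_all
  have "summable (\<lambda>k. pmf (poisson_pmf z) k * (real k - z) ^ 4)"
    using sums(3) by (simp add: sums_iff)
  then have "integrable (centered_poisson z) (\<lambda>x. x ^ 4) \<and> (\<integral>x. x ^ 4 \<partial>centered_poisson z) = 3 * z\<^sup>2 + z"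
    by (intro integral_centered_poisson[OF z _ sums(3)]) (auto simp: abs_mult)
  then show "integrable (centered_poisson z) (\<lambda>x. x ^ 4)" "(\<integral>x. x ^ 4 \<partial>centered_poisson z) = 3 * z\<^sup>2 + z"
    by simp_all
  have "integrable (centered_poisson z) (\<lambda>x. x) \<and> (\<integral>x. x \<partial>centered_poisson z) = 0"
    using summable_poisson_pmf_abs_centered[OF z] by (intro integral_centered_poisson[OF z _ sums(1)]) auto
  then show "integrable (centered_poisson z) (\<lambda>x. x)" "(\<integral>x. x \<partial>centered_poisson z) = 0"
    by simp_all
qed

text \<open>By AM-GM, \<open>\<bar>x\<bar>^3 \<le> (c x\<^sup>2 + x^4 / c) / 2\<close> for every \<open>c > 0\<close>; \<open>c = sqrt (3 z + 1)\<close>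
  balances the second and fourth moments.\<close>
lemma centered_poisson_abs_cube:
  assumes z: "0 < z"
  shows "integrable (centered_poisson z) (\<lambda>x. \<bar>x\<bar> ^ 3)"
    and "(\<integral>x. \<bar>x\<bar> ^ 3 \<partial>centered_poisson z) \<le> z * sqrt (3 * z + 1)"
proof -
  define c where "c = sqrt (3 * z + 1)"
  have c: "0 < c" "c * c = 3 * z + 1"
    using z by (simp_all add: c_def)
  define f where "f x = (c * x\<^sup>2 + x ^ 4 / c) / 2" for x :: real
  note m = centered_poisson_moments[OF z]
  have f_integrable: "integrable (centered_poisson z) f"
    unfolding f_def using m by auto
  have pointwise: "\<bar>x\<bar> ^ 3 \<le> f x" for x
  proof -
    have "0 \<le> x\<^sup>2 * (c - \<bar>x\<bar>)\<^sup>2"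
      by simp
    then have "2 * c * \<bar>x\<bar> ^ 3 \<le> c * c * x\<^sup>2 + x ^ 4"
      by (simp add: power2_eq_square power3_eq_cube power4_eq_xxxx algebra_simps abs_mult_self_eq)
    then show ?thesis
      using c(1) by (simp add: f_def field_simps power2_eq_square power3_eq_cube power4_eq_xxxx)
  qed
  show cube_integrable: "integrable (centered_poisson z) (\<lambda>x. \<bar>x\<bar> ^ 3)"
    using pointwise by (intro Bochner_Integration.integrable_bound[OF f_integrable] AE_I2)
       (auto intro: order_trans[OF _ abs_ge_self])
  have "(\<integral>x. \<bar>x\<bar> ^ 3 \<partial>centered_poisson z) \<le> integral\<^sup>L (centered_poisson z) f"
    using pointwise by (rule integral_mono[OF cube_integrable f_integrable])
  also have "\<dots> = (c * z + (3 * z\<^sup>2 + z) / c) / 2"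
    unfolding f_def using m by simp
  also have "\<dots> = z * c"
  proof -
    have "c * (c * z) = (c * c) * z"
      by simp
    then show ?thesis
      using c by (simp add: field_simps power2_eq_square)
  qed
  finally show "(\<integral>x. \<bar>x\<bar> ^ 3 \<partial>centered_poisson z) \<le> z * sqrt (3 * z + 1)"
    by (simp add: c_def)
qed

interpretation std_normal: prob_space "density lborel std_normal_density"
  by (rule prob_space_normal_density) simp

lemma emeasure_std_normal_le_lborel:
  assumes "A \<in> sets borel"
  shows "emeasure (density lborel std_normal_density) A \<le> emeasure lborel A"
proof -
  have "std_normal_density x \<le> 1" for x
  proof -
    have "1 / sqrt (2 * pi) \<le> 1"
      using pi_gt3 by (simp add: divide_le_eq real_le_rsqrt)
    then show ?thesis
      unfolding std_normal_density_def by (intro mult_le_one) auto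
  qed
  then have "(\<integral>\<^sup>+ x. ennreal (std_normal_density x) * indicator A x \<partial>lborel) \<le> (\<integral>\<^sup>+ x. indicator A x \<partial>lborel)"
    by (intro nn_integral_mono) (auto split: split_indicator)
  then show ?thesis
    using assms by (simp add: emeasure_density)
qed

lemma std_normal_cdf_0: "measure (density lborel std_normal_density) {..0} = 1/2"
proof -
  let ?N = "density lborel std_normal_density"
  have "emeasure ?N {0<..} = (\<integral>\<^sup>+ x. ennreal (std_normal_density x) * indicator {0<..} x \<partial>lborel)"
    by (intro emeasure_density) auto
  also have "\<dots> = ennreal \<bar>- 1 :: real\<bar> *
      (\<integral>\<^sup>+ x. ennreal (std_normal_density (0 + - 1 * x)) * indicator {0<..} (0 + - 1 * x) \<partial>lborel)"
    by (rule nn_integral_real_affine) auto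
  also have "\<dots> = (\<integral>\<^sup>+ x. ennreal (std_normal_density x) * indicator {..<0} x \<partial>lborel)"
    by (auto intro!: nn_integral_cong simp: std_normal_density_def split: split_indicator)
  also have "\<dots> = emeasure ?N {..<0}"
    by (intro emeasure_density[symmetric]) auto
  finally have symmetric: "measure ?N {0<..} = measure ?N {..<0}"
    by (simp add: std_normal.emeasure_eq_measure)
  have "emeasure ?N {0::real} = 0"
    using emeasure_std_normal_le_lborel[of "{0}"] by simp
  then have "measure ?N {..0} = measure ?N {..<0}"
    using std_normal.finite_measure_Union[of "{..<0}" "{0::real}"]
    by (simp add: std_normal.emeasure_eq_measure ivl_disj_un_singleton(2)[symmetric])
  moreover have "measure ?N {..0} + measure ?N {0<..} = 1"
    using std_normal.prob_compl[of "{..0::real}"] by (simp add: Compl_eq_Diff_UNIV[symmetric])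
  ultimately show ?thesis
    using symmetric by simp
qed

text \<open>The standard normal density is at most \<open>1\<close>, so \<open>\<Phi>\<close> is \<open>1\<close>-Lipschitz.\<close>
lemma std_normal_cdf_ge:
  assumes "y \<le> 0"
  shows "1/2 + y \<le> measure (density lborel std_normal_density) {..y}"
proof -
  let ?N = "density lborel std_normal_density"
  have "ennreal (measure ?N {y<..0}) \<le> ennreal (- y)"
    using emeasure_std_normal_le_lborel[of "{y<..0}"] assms by (simp add: std_normal.emeasure_eq_measure)
  then have "measure ?N {y<..0} \<le> - y"
    using assms by (simp add: ennreal_le_iff)
  moreover have "{..0} = {..y} \<union> {y<..0}"
    using assms by auto
  then have "measure ?N {..0} = measure ?N {..y} + measure ?N {y<..0}"
    by (simp add: std_normal.finite_measure_Union ivl_disj_int_one)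
  ultimately show ?thesis
    using std_normal_cdf_0 by simp
qed

section \<open>The Berry-Esseen bound for Poisson sums\<close>

lemma indep_vars_PiM_components:
  assumes M: "\<And>i. i \<in> I \<Longrightarrow> prob_space (M i)" and "I \<noteq> {}"
  shows "prob_space.indep_vars (PiM I M) M (\<lambda>i \<omega>. \<omega> i) I"
proof -
  interpret prob_space "PiM I M"
    using M by (rule prob_space_PiM)
  have "distr (PiM I M) (PiM I M) (\<lambda>\<omega>. restrict \<omega> I) = distr (PiM I M) (PiM I M) (\<lambda>\<omega>. \<omega>)"
    by (rule distr_cong) (auto simp: space_PiM)
  also have "\<dots> = PiM I M"
    by (rule distr_id)
  also have "\<dots> = PiM I (\<lambda>i. distr (PiM I M) (M i) (\<lambda>\<omega>. \<omega> i))"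
  proof (rule PiM_cong[OF refl])
    fix i assume "i \<in> I"
    then show "M i = distr (PiM I M) (M i) (\<lambda>\<omega>. \<omega> i)"
      using distr_PiM_component[of I M i] M by simp
  qed
  finally show ?thesis
    using \<open>I \<noteq> {}\<close> by (subst indep_vars_iff_distr_eq_PiM') auto
qed

definition poisson_count :: "real \<Rightarrow> real \<Rightarrow> nat" where
  "poisson_count z x = nat \<lfloor>x + z\<rfloor>"

lemma poisson_count_measurable [measurable]: "poisson_count z \<in> measurable borel (count_space UNIV)"
  unfolding poisson_count_def by measurable

lemma sets_vimage_poisson_count [simp]: "poisson_count z -` {k} \<in> sets borel"
  using measurable_sets[OF poisson_count_measurable, of "{k}" z] by simp

lemma poisson_count_centered [simp]: "poisson_count z (real k - z) = k"
  by (simp add: poisson_count_def)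

lemma AE_centered_poisson: "AE x in centered_poisson z. x = real (poisson_count z x) - z"
  unfolding centered_poisson_def by (subst AE_distr_iff) auto

lemma prob_poisson_count:
  assumes "0 < z"
  shows "measure (centered_poisson z) (poisson_count z -` {k}) = pmf (poisson_pmf z) k"
proof -
  have "(\<lambda>j. real j - z) -` poisson_count z -` {k} = {k}"
    by auto
  then show ?thesis
    unfolding centered_poisson_def
    by (subst measure_distr) (auto simp: measure_pmf_single)
qed

lemma gen_poisson_sample_centered_poisson:
  assumes z: "0 < z" and n: "1 \<le> n"
  shows "gen_poisson_sample (PiM {..<n} (\<lambda>_. centered_poisson z)) (\<lambda>i \<omega>. poisson_count z (\<omega> i)) z 0 n"
proof -
  let ?N = "PiM {..<n} (\<lambda>_. centered_poisson z)"
  interpret N: prob_space ?N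
    by (intro prob_space_PiM prob_space_centered_poisson)
  show ?thesis
  proof unfold_locales
    show "(\<lambda>\<omega>. poisson_count z (\<omega> i)) \<in> measurable ?N (count_space UNIV)" if "i < n" for i
    proof -
      have "(\<lambda>\<omega>. \<omega> i) \<in> measurable ?N borel"
        using measurable_component_singleton[of i "{..<n}" "\<lambda>_. centered_poisson z"] that
        by (simp add: measurable_cong_sets[OF refl sets_centered_poisson])
      then show ?thesis
        using poisson_count_measurable by (rule measurable_compose)
    qed
    have "{..<n} \<noteq> {}"
      using n by (auto simp: lessThan_empty_iff)
    then show "N.indep_vars (\<lambda>_. count_space UNIV) (\<lambda>i \<omega>. poisson_count z (\<omega> i)) {..<n}"
      by (intro N.indep_vars_compose2[OF indep_vars_PiM_components] prob_space_centered_poisson) auto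
    show "N.prob {\<omega> \<in> space ?N. poisson_count z (\<omega> i) = k} = gen_poisson_pmf z 0 k" if "i < n" for i k
    proof -
      have "N.prob {\<omega> \<in> space ?N. poisson_count z (\<omega> i) = k}
          = measure (distr ?N (centered_poisson z) (\<lambda>\<omega>. \<omega> i)) (poisson_count z -` {k})"
        by (subst measure_distr) (use that in \<open>auto intro!: arg_cong[where f=N.prob]\<close>)
      also have "\<dots> = pmf (poisson_pmf z) k"
        using that distr_PiM_component[of "{..<n}" "\<lambda>_. centered_poisson z" i]
        by (simp add: prob_space_centered_poisson prob_poisson_count z)
      finally show ?thesis
        using z by (simp add: gen_poisson_pmf_0_eq_poisson)
    qed
  qed (use z n in auto)
qed

lemma berry_esseen_error_centered_poisson:
  assumes z: "0 < z" and C: "0 < C"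
  shows "C / sqrt (real n) * (\<integral>x. \<bar>x\<bar> ^ 3 \<partial>centered_poisson z) / (\<integral>x. x\<^sup>2 \<partial>centered_poisson z) powr (3/2)
    \<le> C / sqrt (real n) * (3 + 1 / z) powr (3/4)"
proof -
  have "z powr (3/2) = z powr (1 + 1/2)"
    by simp
  also have "\<dots> = z powr 1 * z powr (1/2)"
    by (rule powr_add)
  finally have z_powr: "z powr (3/2) = z * sqrt z"
    using z by (simp add: powr_half_sqrt)
  have "(\<integral>x. \<bar>x\<bar> ^ 3 \<partial>centered_poisson z) / z powr (3/2) \<le> z * sqrt (3 * z + 1) / (z * sqrt z)"
    unfolding z_powr using centered_poisson_abs_cube[OF z] z by (intro divide_right_mono) auto
  also have "\<dots> = (3 + 1 / z) powr (1/2)"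
    using z by (simp add: real_sqrt_divide[symmetric] powr_half_sqrt add_pos_pos field_simps)
  also have "\<dots> \<le> (3 + 1 / z) powr (3/4)"
    using z by (intro powr_mono) auto
  finally have "C / sqrt (real n) * ((\<integral>x. \<bar>x\<bar> ^ 3 \<partial>centered_poisson z) / z powr (3/2))
      \<le> C / sqrt (real n) * (3 + 1 / z) powr (3/4)"
    using C by (intro mult_left_mono) auto
  then show ?thesis
    using centered_poisson_moments(4)[OF z] by simp
qed

lemma prob_normalized_sum_centered_poisson:
  fixes n :: nat and z y :: real
  defines "N \<equiv> PiM {..<n} (\<lambda>_. centered_poisson z)"
  assumes z: "0 < z" and n: "1 \<le> n" and nonneg: "0 \<le> real n * z + y * sqrt (real n * z)"
  shows "measure N {\<omega> \<in> space N. (\<Sum>i<n. \<omega> i) / sqrt (real n * z) \<le> y}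
    = (\<Sum>j\<le>nat \<lfloor>real n * z + y * sqrt (real n * z)\<rfloor>. pmf (poisson_pmf (real n * z)) j)"
proof -
  interpret gen_poisson_sample N "\<lambda>i \<omega>. poisson_count z (\<omega> i)" z 0 n
    unfolding N_def using z n by (rule gen_poisson_sample_centered_poisson)
  define S where "S \<omega> = (\<Sum>i<n. poisson_count z (\<omega> i))" for \<omega>
  have s: "0 < sqrt (real n * z)"
    using z n by simp
  have "AE \<omega> in N. \<forall>i\<in>{..<n}. \<omega> i = real (poisson_count z (\<omega> i)) - z"
    unfolding N_def
    by (intro eventually_ball_finite ballI AE_PiM_component prob_space_centered_poisson AE_centered_poisson) auto
  then have "AE \<omega> in N. (\<Sum>i<n. \<omega> i) / sqrt (real n * z) \<le> y \<longleftrightarrow> real (S \<omega>) \<le> real n * z + y * sqrt (real n * z)"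
  proof (rule eventually_mono)
    fix \<omega> assume "\<forall>i\<in>{..<n}. \<omega> i = real (poisson_count z (\<omega> i)) - z"
    then have "(\<Sum>i<n. \<omega> i) = (\<Sum>i<n. real (poisson_count z (\<omega> i)) - z)"
      by simp
    also have "\<dots> = real (S \<omega>) - real n * z"
      by (simp add: S_def sum_subtractf)
    finally show "(\<Sum>i<n. \<omega> i) / sqrt (real n * z) \<le> y \<longleftrightarrow> real (S \<omega>) \<le> real n * z + y * sqrt (real n * z)"
      using s by (simp add: pos_divide_le_eq add.commute diff_le_eq)
  qed
  then have "measure N {\<omega> \<in> space N. (\<Sum>i<n. \<omega> i) / sqrt (real n * z) \<le> y}
      = measure N {\<omega> \<in> space N. real (S \<omega>) \<le> real n * z + y * sqrt (real n * z)}"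
    unfolding S_def N_def by (intro measure_eq_AE) auto
  also have "\<dots> = (\<Sum>j\<le>nat \<lfloor>real n * z + y * sqrt (real n * z)\<rfloor>. pmf (poisson_pmf (real n * z)) j)"
    unfolding S_def using prob_nat_le_eq_sum[OF sum_events[OF order_refl] nonneg] sum_distribution z n
    by (simp add: gen_poisson_pmf_0_eq_poisson)
  finally show ?thesis .
qed

lemma poisson_cdf_berry_esseen:
  assumes z: "0 < z" and n: "1 \<le> n" and C: "berry_esseen_const C"
    and nonneg: "0 \<le> real n * z + y * sqrt (real n * z)"
  shows "\<bar>(\<Sum>j\<le>nat \<lfloor>real n * z + y * sqrt (real n * z)\<rfloor>. pmf (poisson_pmf (real n * z)) j)
      - measure (density lborel std_normal_density) {..y}\<bar> \<le> C / sqrt (real n) * (3 + 1 / z) powr (3/4)"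
proof -
  note m = centered_poisson_moments[OF z] and cube = centered_poisson_abs_cube[OF z]
  have "0 < C"
    using C by (simp add: berry_esseen_const_def)
  moreover have "prob_space (centered_poisson z) \<and> sets (centered_poisson z) = sets borel \<and>
      integrable (centered_poisson z) (\<lambda>x. \<bar>x\<bar> ^ 3) \<and> (\<integral>x. x \<partial>centered_poisson z) = 0 \<and>
      (\<integral>x. x\<^sup>2 \<partial>centered_poisson z) > 0"
    using prob_space_centered_poisson m cube z by simp
  with C have "\<bar>measure (PiM {..<n} (\<lambda>_. centered_poisson z))
              {\<omega> \<in> space (PiM {..<n} (\<lambda>_. centered_poisson z)).
                 (\<Sum>i<n. \<omega> i) / sqrt (real n * (\<integral>x. x\<^sup>2 \<partial>centered_poisson z)) \<le> y}
           - measure (density lborel std_normal_density) {..y}\<bar>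
        \<le> C / sqrt (real n) * (\<integral>x. \<bar>x\<bar> ^ 3 \<partial>centered_poisson z) / (\<integral>x. x\<^sup>2 \<partial>centered_poisson z) powr (3/2)"
    using n unfolding berry_esseen_const_def by blast
  ultimately show ?thesis
    using prob_normalized_sum_centered_poisson[OF z n nonneg] m(4)
      berry_esseen_error_centered_poisson[OF z, of C n] by simp
qed

lemma poisson_cdf_at_mean_berry_esseen:
  assumes "0 < z" "1 \<le> n" "berry_esseen_const C"
  shows "(\<Sum>j\<le>nat \<lfloor>real n * z\<rfloor>. pmf (poisson_pmf (real n * z)) j) \<le> 1/2 + C / sqrt (real n) * (3 + 1 / z) powr (3/4)"
  using poisson_cdf_berry_esseen[OF assms, of 0] assms(1,2) by (simp add: std_normal_cdf_0)

lemma poisson_cdf_below_mean_berry_esseen: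
  assumes z: "0 < z" and n: "1 \<le> n" and C: "berry_esseen_const C"
    and eta: "0 < eta" "eta \<le> real n * z - real (nat \<lceil>real n * z\<rceil>) + 1"
  shows "1/2 - eta / sqrt (real n * z) - C / sqrt (real n) * (3 + 1 / z) powr (3/4)
    \<le> (\<Sum>j<nat \<lceil>real n * z\<rceil>. pmf (poisson_pmf (real n * z)) j)"
proof -
  define N where "N = nat \<lceil>real n * z\<rceil>"
  define s where "s = sqrt (real n * z)"
  have nz: "0 < real n * z" and s: "0 < s"
    using z n by (simp_all add: s_def)
  have N: "real n * z \<le> real N" "1 \<le> N"
    unfolding N_def using nz by linarith+
  have eta_N: "eta \<le> real n * z - real N + 1"
    using eta(2) by (simp add: N_def)
  have nonneg: "0 \<le> real n * z + (- eta / s) * s"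
    using eta_N N s by simp
  have "\<lfloor>real n * z - eta\<rfloor> = int (N - 1)"
    using eta(1) eta_N N by (simp add: floor_eq_iff of_nat_diff)
  then have "nat \<lfloor>real n * z + (- eta / s) * s\<rfloor> = N - 1"
    using s by simp
  moreover have "(\<Sum>j\<le>N - 1. pmf (poisson_pmf (real n * z)) j) = (\<Sum>j<N. pmf (poisson_pmf (real n * z)) j)"
    using N(2) by (intro sum.cong) auto
  ultimately have "measure (density lborel std_normal_density) {..- eta / s} - C / sqrt (real n) * (3 + 1 / z) powr (3/4)
      \<le> (\<Sum>j<N. pmf (poisson_pmf (real n * z)) j)"
    using poisson_cdf_berry_esseen[OF z n C nonneg[unfolded s_def]] unfolding s_def by simp
  moreover have "1/2 + (- eta / s) \<le> measure (density lborel std_normal_density) {..- eta / s}"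
    using eta s by (intro std_normal_cdf_ge) simp
  ultimately show ?thesis
    by (simp add: N_def s_def)
qed

text \<open>Since \<open>n z\<close> need not be an integer, the tail \<open>{j \<ge> \<lceil>n z\<rceil>}\<close> is reached by letting
  \<open>y \<rightarrow> 0\<^sup>-\<close> in the Berry-Esseen bound, using \<open>\<Phi> y \<ge> 1/2 + y\<close>.\<close>
lemma poisson_tail_at_mean_berry_esseen:
  assumes z: "0 < z" and n: "1 \<le> n" and C: "berry_esseen_const C"
  shows "(\<Sum>j. pmf (poisson_pmf (real n * z)) (j + nat \<lceil>real n * z\<rceil>)) \<le> 1/2 + C / sqrt (real n) * (3 + 1 / z) powr (3/4)"
proof -
  define N where "N = nat \<lceil>real n * z\<rceil>"
  define E where "E = C / sqrt (real n) * (3 + 1 / z) powr (3/4)"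
  define A where "A = (\<Sum>j<N. pmf (poisson_pmf (real n * z)) j)"
  define s where "s = sqrt (real n * z)"
  have nz: "0 < real n * z" and s: "0 < s"
    using z n by (simp_all add: s_def)
  have "1/2 - E \<le> A + e" if "0 < e" for e
  proof -
    define eta where "eta = min (real n * z - real N + 1) (s * e)"
    have "real N < real n * z + 1"
      unfolding N_def using nz by linarith
    then have eta: "0 < eta" "eta \<le> real n * z - real N + 1" and "eta / s \<le> e"
      using s \<open>0 < e\<close> by (auto simp: eta_def min_le_iff_disj pos_divide_le_eq mult.commute)
    have "1/2 - eta / s - E \<le> A"
      using poisson_cdf_below_mean_berry_esseen[OF z n C eta[unfolded N_def]]
      unfolding A_def E_def N_def s_def .
    with \<open>eta / s \<le> e\<close> show ?thesis
      by linarith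
  qed
  then have "1/2 - E \<le> A"
    by (rule field_le_epsilon)
  moreover have "(\<Sum>j. pmf (poisson_pmf (real n * z)) (j + N)) = 1 - A"
    unfolding A_def using suminf_split_initial_segment[of "pmf (poisson_pmf (real n * z))" N]
      sums_poisson_pmf[OF nz] by (simp add: sums_iff)
  ultimately show ?thesis
    by (simp add: N_def E_def)
qed

context gen_poisson_sample
begin

lemma poisson_prob_mean_le:
  assumes "alpha = 0" and C: "berry_esseen_const C" and z: "0 < z" "z \<le> lam"
  shows "prob {\<omega> \<in> space M. (\<Sum>i<n. real (X i \<omega>)) / real n \<le> z}
    \<le> (1/2 + min (1/2) (C / sqrt (real n) * (3 + 1 / z) powr (3/4))) * (lam powr z * exp z / (z powr z * exp lam)) ^ n"
proof -
  have nz: "0 < real n * z"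
    using z n_ge_1 by simp
  have "(\<Sum>j\<le>nat \<lfloor>real n * z\<rfloor>. gen_poisson_pmf (real n * z) alpha j) \<le> 1"
    using nz by (rule sum_gen_poisson_pmf_le_1)
  moreover have "(\<Sum>j\<le>nat \<lfloor>real n * z\<rfloor>. gen_poisson_pmf (real n * z) alpha j)
      \<le> 1/2 + C / sqrt (real n) * (3 + 1 / z) powr (3/4)"
    using poisson_cdf_at_mean_berry_esseen[OF z(1) n_ge_1 C] nz
    by (simp add: \<open>alpha = 0\<close> gen_poisson_pmf_0_eq_poisson)
  ultimately have T: "(\<Sum>j\<le>nat \<lfloor>real n * z\<rfloor>. gen_poisson_pmf (real n * z) alpha j)
      \<le> 1/2 + min (1/2) (C / sqrt (real n) * (3 + 1 / z) powr (3/4))"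
    by (simp add: min_def)
  have "prob {\<omega> \<in> space M. (\<Sum>i<n. real (X i \<omega>)) / real n \<le> z}
      \<le> gen_poisson_mean_bound n lam alpha z z * (\<Sum>j\<le>nat \<lfloor>real n * z\<rfloor>. gen_poisson_pmf (real n * z) alpha j)"
    using z by (intro prob_mean_le_ratio) auto
  also have "\<dots> \<le> gen_poisson_mean_bound n lam alpha z z * (1/2 + min (1/2) (C / sqrt (real n) * (3 + 1 / z) powr (3/4)))"
    using T z lam_pos alpha_nonneg by (intro mult_left_mono gen_poisson_mean_bound_nonneg) auto
  also have "gen_poisson_mean_bound n lam alpha z z = (lam powr z * exp z / (z powr z * exp lam)) ^ n"
    using lam_pos z by (simp add: \<open>alpha = 0\<close> gen_poisson_mean_bound_poisson)
  finally show ?thesis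
    by (simp add: mult.commute)
qed

lemma poisson_prob_mean_ge:
  assumes "alpha = 0" and C: "berry_esseen_const C" and z: "lam \<le> z"
  shows "prob {\<omega> \<in> space M. z \<le> (\<Sum>i<n. real (X i \<omega>)) / real n}
    \<le> (1/2 + min (1/2) (C / sqrt (real n) * (3 + 1 / z) powr (3/4))) * (lam powr z * exp z / (z powr z * exp lam)) ^ n"
proof -
  have "0 < z"
    using z lam_pos by simp
  then have nz: "0 < real n * z"
    using n_ge_1 by simp
  have "(\<Sum>j. gen_poisson_pmf (real n * z) alpha (j + nat \<lceil>real n * z\<rceil>)) \<le> 1"
    using nz by (rule suminf_shift_gen_poisson_pmf_le_1)
  moreover have "(\<Sum>j. gen_poisson_pmf (real n * z) alpha (j + nat \<lceil>real n * z\<rceil>))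
      \<le> 1/2 + C / sqrt (real n) * (3 + 1 / z) powr (3/4)"
    using poisson_tail_at_mean_berry_esseen[OF \<open>0 < z\<close> n_ge_1 C] nz
    by (simp add: \<open>alpha = 0\<close> gen_poisson_pmf_0_eq_poisson)
  ultimately have T: "(\<Sum>j. gen_poisson_pmf (real n * z) alpha (j + nat \<lceil>real n * z\<rceil>))
      \<le> 1/2 + min (1/2) (C / sqrt (real n) * (3 + 1 / z) powr (3/4))"
    by (simp add: min_def)
  have "prob {\<omega> \<in> space M. z \<le> (\<Sum>i<n. real (X i \<omega>)) / real n}
      \<le> gen_poisson_mean_bound n lam alpha z z * (\<Sum>j. gen_poisson_pmf (real n * z) alpha (j + nat \<lceil>real n * z\<rceil>))"
    using z \<open>0 < z\<close> by (intro prob_mean_ge_ratio)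
  also have "\<dots> \<le> gen_poisson_mean_bound n lam alpha z z * (1/2 + min (1/2) (C / sqrt (real n) * (3 + 1 / z) powr (3/4)))"
    using T \<open>0 < z\<close> lam_pos alpha_nonneg by (intro mult_left_mono gen_poisson_mean_bound_nonneg) auto
  also have "gen_poisson_mean_bound n lam alpha z z = (lam powr z * exp z / (z powr z * exp lam)) ^ n"
    using lam_pos \<open>0 < z\<close> by (simp add: \<open>alpha = 0\<close> gen_poisson_mean_bound_poisson)
  finally show ?thesis
    by (simp add: mult.commute)
qed

end

theorem theorem8:
  fixes M :: "'a measure" and X :: "nat \<Rightarrow> 'a \<Rightarrow> nat"
    and lam alpha :: real and n :: nat
  assumes "prob_space M"
    and "lam > 0" and "0 \<le> alpha" and "alpha < 1" and "n \<ge> 1"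
    and "\<And>i. i < n \<Longrightarrow> X i \<in> measurable M (count_space UNIV)"
    and "prob_space.indep_vars M (\<lambda>_. count_space UNIV) X {..<n}"
    and "\<And>i x. i < n \<Longrightarrow>
           measure M {\<omega> \<in> space M. X i \<omega> = x} = gen_poisson_pmf lam alpha x"
  shows
  "(\<forall>z::real. 0 < z \<and> z \<le> lam / (1 - alpha) \<longrightarrow>
      measure M {\<omega> \<in> space M. (\<Sum>i<n. real (X i \<omega>)) / real n \<le> z}
      \<le> lam / ((1 - alpha) * (lam + z * alpha)) *
         ((lam / z + alpha) powr z * exp ((1 - alpha) * z) / exp lam) ^ n)
 \<and> (\<forall>z::real. z \<ge> lam / (1 - alpha) \<longrightarrow>
      measure M {\<omega> \<in> space M. (\<Sum>i<n. real (X i \<omega>)) / real n \<ge> z}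
      \<le> lam / ((1 - alpha) * (lam + z * alpha)) *
         ((lam / z + alpha) powr z * exp ((1 - alpha) * z) / exp lam) ^ n)
 \<and> (\<forall>z::real. 0 < z \<and> z \<le> lam / (1 - alpha + alpha / (real n * lam)) \<longrightarrow>
      (let \<nu> = ((1 - alpha) * z + sqrt ((1 - alpha)^2 * z^2 + 4 * z * alpha / real n)) / 2 in
      measure M {\<omega> \<in> space M. (\<Sum>i<n. real (X i \<omega>)) / real n \<le> z}
      \<le> lam * (\<nu> + z * alpha) / (\<nu> * (lam + z * alpha)) *
         (((lam + z * alpha) / (\<nu> + z * alpha)) powr z * exp \<nu> / exp lam) ^ n))
 \<and> (\<forall>z::real. z \<ge> lam / (1 - alpha + alpha / (real n * lam)) \<longrightarrow>
      (let \<nu> = ((1 - alpha) * z + sqrt ((1 - alpha)^2 * z^2 + 4 * z * alpha / real n)) / 2 in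
      measure M {\<omega> \<in> space M. (\<Sum>i<n. real (X i \<omega>)) / real n \<ge> z}
      \<le> lam * (\<nu> + z * alpha) / (\<nu> * (lam + z * alpha)) *
         (((lam + z * alpha) / (\<nu> + z * alpha)) powr z * exp \<nu> / exp lam) ^ n))
 \<and> (alpha = 0 \<longrightarrow> (\<forall>C. berry_esseen_const C \<longrightarrow>
      (\<forall>z::real. z \<ge> lam \<longrightarrow>
         measure M {\<omega> \<in> space M. (\<Sum>i<n. real (X i \<omega>)) / real n \<ge> z}
         \<le> (1/2 + min (1/2) (C / sqrt (real n) * (3 + 1 / z) powr (3/4))) *
            (lam powr z * exp z / (z powr z * exp lam)) ^ n)
    \<and> (\<forall>z::real. 0 < z \<and> z \<le> lam \<longrightarrow>
         measure M {\<omega> \<in> space M. (\<Sum>i<n. real (X i \<omega>)) / real n \<le> z}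
         \<le> (1/2 + min (1/2) (C / sqrt (real n) * (3 + 1 / z) powr (3/4))) *
            (lam powr z * exp z / (z powr z * exp lam)) ^ n)))"
proof -
  interpret gen_poisson_sample M X lam alpha n
    using assms by (intro gen_poisson_sample.intro gen_poisson_sample_axioms.intro) auto
  show ?thesis
    unfolding Let_def gen_poisson_mean_bound_def[symmetric]
    using prob_mean_le_linear prob_mean_ge_linear prob_mean_le_nu prob_mean_ge_nu
      poisson_prob_mean_ge poisson_prob_mean_le
    by blast
qed

end
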